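(* Let $\Gamma=(V,E)$ be a graph and for each $v\in V$ let $C_v$ be a left LCM monoid. Then the graph product $C=\Gamma_{v\in V}C_v$ is also a left LCM monoid.
   Context: A graph $\Gamma=(V,E)$ consists of a set $V$ of vertices and an irreflexive symmetric relation $E\subseteq V\times V$. For monoids $C_v$ ($v\in V$, pairwise disjoint), the graph product $\Gamma_{v\in V}C_v$ is the quotient of the free product of the $C_v$ by the congruence generated by all pairs $(mn,nm)$ with $m\in C_u$, $n\in C_v$, $(u,v)\in E$. A left LCM monoid is a right cancellative monoid $C$ in which, for all $a,b\in C$, the intersection $Ca\cap Cb$ of principal left ideals is either empty or a principal left ideal $Cm$ for some $m\in C$. *)

theory Defs
  imports "HOL-Algebra.Group"
begin

definition principal_left_ideal :: "('a, 'b) monoid_scheme \<Rightarrow> 'a \<Rightarrow> 'a set" where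
  "principal_left_ideal M a = {c \<otimes>\<^bsub>M\<^esub> a | c. c \<in> carrier M}"

definition right_cancellative :: "('a, 'b) monoid_scheme \<Rightarrow> bool" where
  "right_cancellative M \<longleftrightarrow>
     (\<forall>a\<in>carrier M. \<forall>b\<in>carrier M. \<forall>c\<in>carrier M.
        a \<otimes>\<^bsub>M\<^esub> c = b \<otimes>\<^bsub>M\<^esub> c \<longrightarrow> a = b)"

definition left_LCM_monoid :: "('a, 'b) monoid_scheme \<Rightarrow> bool" where
  "left_LCM_monoid M \<longleftrightarrow> monoid M \<and> right_cancellative M \<and>
     (\<forall>a\<in>carrier M. \<forall>b\<in>carrier M.
        principal_left_ideal M a \<inter> principal_left_ideal M b = {} \<or>
        (\<exists>m\<in>carrier M. principal_left_ideal M a \<inter> principal_left_ideal M b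
                          = principal_left_ideal M m))"

text \<open>Letters of the free product: elements of C v tagged by their vertex v
  (this makes the carriers pairwise disjoint).\<close>

definition gp_letters :: "'v set \<Rightarrow> ('v \<Rightarrow> 'a monoid) \<Rightarrow> ('v \<times> 'a) set" where
  "gp_letters V C = {(v, m). v \<in> V \<and> m \<in> carrier (C v)}"

text \<open>Defining relations: the free product of the C v is presented by
  identifying the identity of each C v with the empty word and a two-letter
  word from the same vertex with the product; the graph product additionally
  commutes letters from adjacent vertices.\<close>

inductive gp_basic :: "'v set \<Rightarrow> ('v \<times> 'v) set \<Rightarrow> ('v \<Rightarrow> 'a monoid)
    \<Rightarrow> ('v \<times> 'a) list \<Rightarrow> ('v \<times> 'a) list \<Rightarrow> bool"
  for V E C where
  unit: "v \<in> V \<Longrightarrow> gp_basic V E C [(v, \<one>\<^bsub>C v\<^esub>)] []"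
| mult: "v \<in> V \<Longrightarrow> a \<in> carrier (C v) \<Longrightarrow> b \<in> carrier (C v) \<Longrightarrow>
         gp_basic V E C [(v, a), (v, b)] [(v, a \<otimes>\<^bsub>C v\<^esub> b)]"
| comm: "(u, v) \<in> E \<Longrightarrow> u \<in> V \<Longrightarrow> v \<in> V \<Longrightarrow> m \<in> carrier (C u) \<Longrightarrow> n \<in> carrier (C v) \<Longrightarrow>
         gp_basic V E C [(u, m), (v, n)] [(v, n), (u, m)]"

inductive gp_cong :: "'v set \<Rightarrow> ('v \<times> 'v) set \<Rightarrow> ('v \<Rightarrow> 'a monoid)
    \<Rightarrow> ('v \<times> 'a) list \<Rightarrow> ('v \<times> 'a) list \<Rightarrow> bool"
  for V E C where
  refl: "x \<in> lists (gp_letters V C) \<Longrightarrow> gp_cong V E C x x"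
| step: "x \<in> lists (gp_letters V C) \<Longrightarrow> y \<in> lists (gp_letters V C) \<Longrightarrow>
         gp_basic V E C r s \<Longrightarrow> gp_cong V E C (x @ r @ y) (x @ s @ y)"
| sym: "gp_cong V E C x y \<Longrightarrow> gp_cong V E C y x"
| trans: "gp_cong V E C x y \<Longrightarrow> gp_cong V E C y z \<Longrightarrow> gp_cong V E C x z"

definition gp_class :: "'v set \<Rightarrow> ('v \<times> 'v) set \<Rightarrow> ('v \<Rightarrow> 'a monoid)
    \<Rightarrow> ('v \<times> 'a) list \<Rightarrow> ('v \<times> 'a) list set" where
  "gp_class V E C x = {z. gp_cong V E C z x}"

definition graph_product :: "'v set \<Rightarrow> ('v \<times> 'v) set \<Rightarrow> ('v \<Rightarrow> 'a monoid)
    \<Rightarrow> ('v \<times> 'a) list set monoid" where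
  "graph_product V E C =
     \<lparr> carrier = gp_class V E C ` lists (gp_letters V C),
       mult = (\<lambda>X Y. {z. \<exists>x\<in>X. \<exists>y\<in>Y. gp_cong V E C z (x @ y)}),
       one = gp_class V E C [] \<rparr>"

end

theory Submission
  imports Defs
begin

text \<open>Elements of the graph product are represented by reduced words: no letter is an identity,
  and no letter can be moved by commutations next to an earlier letter of its own vertex. Right
  multiplication by one letter preserves reducedness, and two words are congruent iff their
  normal forms have the same projections onto all pairs of non-adjacent vertices. A letter (v, m)
  acts on these projections only through the v-entry at the right end, so right cancellation in
  C v lifts to the graph product.

  For the LCM property, the left multiples of y @ [l] are the left multiples of [l] whose
  cancellation of l is a left multiple of y; so it suffices to intersect with the left multiples of
  a single letter (v, b), by induction on the length of the other word x. If x ends in a v-letter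
  (v, t), the LCM of t and b in C v reduces the problem to a shorter word; if all of x commutes
  with v, the LCM is (v, b) x; a unit letter that can be moved to the front of x may be dropped;
  otherwise every left multiple of x has trivial v-entry at the right end, and the intersection is
  all of them or none.\<close>

lemma (in monoid) Units_of_l_inv_rcancel:
  assumes "right_cancellative G" and "p \<in> carrier G" and "n \<in> carrier G" and "p \<otimes> n = \<one>"
  shows "n \<in> Units G"
proof -
  have "(n \<otimes> p) \<otimes> n = \<one> \<otimes> n"
    using assms(2-4) by (simp add: m_assoc)
  moreover have "n \<otimes> p \<in> carrier G" using assms(2,3) by simp
  ultimately have "n \<otimes> p = \<one>"
    using assms(1,3) unfolding right_cancellative_def by blast
  then show ?thesis using assms(2-4) unfolding Units_def by blast
qed

lemma (in monoid) principal_left_ideal_Int_quotient: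
  assumes rc: "right_cancellative G" and t: "t \<in> carrier G" and l: "l \<in> carrier G"
    and lcm: "principal_left_ideal G t \<inter> principal_left_ideal G b = principal_left_ideal G l"
  obtains q where "q \<in> carrier G"
    and "\<And>s. s \<in> carrier G \<Longrightarrow> s \<otimes> t \<in> principal_left_ideal G b \<longleftrightarrow> s \<in> principal_left_ideal G q"
proof -
  have "l = \<one> \<otimes> l" using l by simp
  then have "l \<in> principal_left_ideal G l"
    unfolding principal_left_ideal_def by blast
  then obtain q where q: "q \<in> carrier G" "l = q \<otimes> t"
    using lcm unfolding principal_left_ideal_def by blast
  have "s \<otimes> t \<in> principal_left_ideal G b \<longleftrightarrow> s \<in> principal_left_ideal G q" if s: "s \<in> carrier G" for s
  proof
    assume "s \<otimes> t \<in> principal_left_ideal G b"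
    moreover have "s \<otimes> t \<in> principal_left_ideal G t" using s unfolding principal_left_ideal_def
      by blast
    ultimately obtain c where c: "c \<in> carrier G" "s \<otimes> t = c \<otimes> (q \<otimes> t)"
      using lcm q(2) unfolding principal_left_ideal_def by blast
    then have "s \<otimes> t = (c \<otimes> q) \<otimes> t" using q t by (simp add: m_assoc)
    then have "s = c \<otimes> q" using rc s c q t unfolding right_cancellative_def by blast
    then show "s \<in> principal_left_ideal G q" using c unfolding principal_left_ideal_def by blast
  next
    assume "s \<in> principal_left_ideal G q"
    then obtain c where c: "c \<in> carrier G" "s = c \<otimes> q" unfolding principal_left_ideal_def by blast
    then have "s \<otimes> t = c \<otimes> l" using q t by (simp add: m_assoc)
    then show "s \<otimes> t \<in> principal_left_ideal G b" using c lcm unfolding principal_left_ideal_def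
      by blast
  qed
  with q(1) show thesis by (rule that)
qed

locale LCM_graph_product =
  fixes V :: "'v set" and E :: "('v \<times> 'v) set" and C :: "'v \<Rightarrow> 'a monoid"
  assumes E_subset: "E \<subseteq> V \<times> V" and irrefl_E: "irrefl E" and sym_E: "sym E"
    and LCM_C: "\<forall>v\<in>V. left_LCM_monoid (C v)"
begin

abbreviation letters where "letters \<equiv> gp_letters V C"

abbreviation cong where "cong \<equiv> gp_cong V E C"

lemma monoid_C: "v \<in> V \<Longrightarrow> monoid (C v)"
  using LCM_C unfolding left_LCM_monoid_def by blast

lemma right_cancellative_C: "v \<in> V \<Longrightarrow> right_cancellative (C v)"
  using LCM_C unfolding left_LCM_monoid_def by blast

lemma C_rcancel: "v \<in> V \<Longrightarrow> a \<in> carrier (C v) \<Longrightarrow> b \<in> carrier (C v) \<Longrightarrow> c \<in> carrier (C v)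
  \<Longrightarrow> a \<otimes>\<^bsub>C v\<^esub> c = b \<otimes>\<^bsub>C v\<^esub> c \<Longrightarrow> a = b"
  using right_cancellative_C unfolding right_cancellative_def by blast

lemma in_letters_iff[simp]: "(v, m) \<in> letters \<longleftrightarrow> v \<in> V \<and> m \<in> carrier (C v)"
  by (simp add: gp_letters_def)

lemma no_loop[simp]: "(v, v) \<notin> E"
  using irrefl_E by (simp add: irrefl_def)

lemma E_sym: "(u, v) \<in> E \<Longrightarrow> (v, u) \<in> E"
  using sym_E by (simp add: sym_def)

lemma E_in_V: "(u, v) \<in> E \<Longrightarrow> u \<in> V \<and> v \<in> V"
  using E_subset by blast

lemma gp_basic_lists: "gp_basic V E C r s \<Longrightarrow> r \<in> lists letters \<and> s \<in> lists letters"
  by (induction rule: gp_basic.induct)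
    (auto intro: monoid.m_closed[OF monoid_C] monoid.one_closed[OF monoid_C])

lemma cong_lists: "cong x y \<Longrightarrow> x \<in> lists letters \<and> y \<in> lists letters"
  by (induction rule: gp_cong.induct) (auto dest: gp_basic_lists)

lemma cong_refl: "x \<in> lists letters \<Longrightarrow> cong x x"
  by (rule gp_cong.refl)

lemma cong_sym: "cong x y \<Longrightarrow> cong y x"
  by (rule gp_cong.sym)

lemma cong_trans: "cong x y \<Longrightarrow> cong y z \<Longrightarrow> cong x z"
  by (rule gp_cong.trans)

lemma cong_append_right: "cong x y \<Longrightarrow> z \<in> lists letters \<Longrightarrow> cong (x @ z) (y @ z)"
proof (induction rule: gp_cong.induct)
  case (refl x) then show ?case by (intro gp_cong.refl) simp
next
  case (step x y r s)
  then show ?case using gp_cong.step[where x=x and y="y @ z" and r=r and s=s] by simp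
next
  case (sym x y) then show ?case by (auto intro: gp_cong.sym)
next
  case (trans x y z') then show ?case by (auto intro: gp_cong.trans)
qed

lemma cong_append_left: "cong x y \<Longrightarrow> z \<in> lists letters \<Longrightarrow> cong (z @ x) (z @ y)"
proof (induction rule: gp_cong.induct)
  case (refl x) then show ?case by (intro gp_cong.refl) simp
next
  case (step x y r s)
  then show ?case using gp_cong.step[where x="z @ x" and y=y and r=r and s=s] by simp
next
  case (sym x y) then show ?case by (auto intro: gp_cong.sym)
next
  case (trans x y z') then show ?case by (auto intro: gp_cong.trans)
qed

lemma cong_append: "cong x y \<Longrightarrow> cong x' y' \<Longrightarrow> cong (x @ x') (y @ y')"
  by (meson cong_append_left cong_append_right cong_lists cong_trans)

lemma cong_basic: "x \<in> lists letters \<Longrightarrow> y \<in> lists letters \<Longrightarrow> gp_basic V E C r s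
    \<Longrightarrow> cong (x @ r @ y) (x @ s @ y)"
  by (rule gp_cong.step)

lemma cong_snoc_one: "w \<in> lists letters \<Longrightarrow> v \<in> V \<Longrightarrow> cong (w @ [(v, \<one>\<^bsub>C v\<^esub>)]) w"
  using cong_basic[of w "[]", OF _ _ gp_basic.unit] by simp

lemma cong_snoc_mult:
  "w \<in> lists letters \<Longrightarrow> v \<in> V \<Longrightarrow> a \<in> carrier (C v) \<Longrightarrow> b \<in> carrier (C v) \<Longrightarrow>
    cong (w @ [(v, a), (v, b)]) (w @ [(v, a \<otimes>\<^bsub>C v\<^esub> b)])"
  using cong_basic[of w "[]", OF _ _ gp_basic.mult] by simp

lemma cong_move_letter:
  assumes "a \<in> lists letters" "(v, n) \<in> letters" "b \<in> lists letters" "\<forall>y\<in>set b. (fst y, v) \<in> E"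
  shows "cong (a @ [(v, n)] @ b) (a @ b @ [(v, n)])"
  using assms
proof (induction b arbitrary: a)
  case Nil
  then show ?case by (simp add: cong_refl)
next
  case (Cons y b)
  obtain u k where y: "y = (u, k)" by (cases y)
  have vu: "(v, u) \<in> E" using Cons y E_sym by simp
  have "gp_basic V E C [(v, n), (u, k)] [(u, k), (v, n)]"
    using vu Cons y E_in_V[OF vu] by (intro gp_basic.comm) auto
  then have 1: "cong (a @ [(v, n), (u, k)] @ b) (a @ [(u, k), (v, n)] @ b)"
    using Cons by (intro cong_basic) auto
  have 2: "cong ((a @ [(u, k)]) @ [(v, n)] @ b) ((a @ [(u, k)]) @ b @ [(v, n)])"
    using Cons y by (intro Cons.IH) auto
  show ?case using cong_trans[OF 1] 2 y by simp
qed

section \<open>Projections onto pairs of non-adjacent vertices\<close>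

definition proj :: "'v \<Rightarrow> 'v \<Rightarrow> ('v \<times> 'a) list \<Rightarrow> ('v \<times> 'a) list" where
  "proj u v w = filter (\<lambda>x. fst x = u \<or> fst x = v) w"

text \<open>The pair u = v is allowed (E is irreflexive) and yields the projection onto one vertex.\<close>

definition proj_eq :: "('v \<times> 'a) list \<Rightarrow> ('v \<times> 'a) list \<Rightarrow> bool" where
  "proj_eq w w' \<longleftrightarrow> (\<forall>u v. (u, v) \<notin> E \<longrightarrow> proj u v w = proj u v w')"

lemma proj_commute: "proj u v w = proj v u w"
  unfolding proj_def by meson

lemma proj_append[simp]: "proj u v (a @ b) = proj u v a @ proj u v b"
  by (simp add: proj_def)

lemma proj_Nil[simp]: "proj u v [] = []"
  by (simp add: proj_def)

lemma proj_eq_refl[simp]: "proj_eq w w" by (simp add: proj_eq_def)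

lemma proj_eq_sym: "proj_eq w w' \<Longrightarrow> proj_eq w' w" by (simp add: proj_eq_def)

lemma proj_eq_trans: "proj_eq w w' \<Longrightarrow> proj_eq w' w'' \<Longrightarrow> proj_eq w w''" by (simp add: proj_eq_def)

lemma proj_eq_snoc_cancel: "proj_eq (a @ [x]) (b @ [x]) \<Longrightarrow> proj_eq a b"
  unfolding proj_eq_def by (auto simp: proj_def split: if_splits)

lemma proj_eqI_at_vertex:
  assumes at_v: "\<And>x. (x, v) \<notin> E \<Longrightarrow> proj x v w = proj x v w'"
    and away: "\<And>u u'. (u, u') \<notin> E \<Longrightarrow> u \<noteq> v \<Longrightarrow> u' \<noteq> v \<Longrightarrow> proj u u' w = proj u u' w'"
  shows "proj_eq w w'"
  unfolding proj_eq_def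
proof (intro allI impI)
  fix u u' assume uu: "(u, u') \<notin> E"
  consider "u' = v" | "u = v" | "u \<noteq> v" "u' \<noteq> v" by blast
  then show "proj u u' w = proj u u' w'"
  proof cases
    case 1
    then show ?thesis using at_v uu by simp
  next
    case 2
    have "(u', u) \<notin> E" using uu E_sym by blast
    then show ?thesis using at_v[of u'] 2 proj_commute[of u u' w] proj_commute[of u u' w'] by simp
  next
    case 3
    then show ?thesis using away uu by blast
  qed
qed

lemma proj_same: "proj v v w = filter (\<lambda>x. fst x = v) w"
  by (simp add: proj_def)

lemma proj_commuting_Nil: "\<forall>y\<in>set b. (fst y, v) \<in> E \<Longrightarrow> (u, v) \<notin> E \<Longrightarrow> proj u v b = []"
  by (auto simp: proj_def filter_empty_conv dest: E_sym)

lemma proj_eq_move_letter: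
  assumes "\<forall>y\<in>set b. (fst y, v) \<in> E"
  shows "proj_eq (a @ [(v, n)] @ b) (a @ b @ [(v, n)])"
proof (rule proj_eqI_at_vertex)
  fix x assume "(x, v) \<notin> E"
  then show "proj x v (a @ [(v, n)] @ b) = proj x v (a @ b @ [(v, n)])"
    using proj_commuting_Nil[OF assms] by (simp add: proj_def)
qed (simp add: proj_def)

lemma proj_eq_Nil: "proj_eq [] w' \<Longrightarrow> w' = []"
proof (cases w')
  case (Cons y ys)
  assume "proj_eq [] w'"
  then have "proj (fst y) (fst y) w' = []" unfolding proj_eq_def by simp
  then show ?thesis using Cons by (simp add: proj_def)
qed simp

text \<open>ends_in v w: some v-letter of w can be commuted to the right end, i.e. the last v-letter
  is followed only by letters adjacent to v (ends_in_split). It is phrased through the vertex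
  sequence so that it visibly depends only on projections.\<close>

definition ends_in_seq :: "'v \<Rightarrow> 'v list \<Rightarrow> bool" where
  "ends_in_seq v vs \<longleftrightarrow> v \<in> set vs \<and> (\<forall>u. (u, v) \<notin> E \<longrightarrow> last (filter (\<lambda>x. x = u \<or> x = v) vs) = v)"

definition ends_in :: "'v \<Rightarrow> ('v \<times> 'a) list \<Rightarrow> bool" where
  "ends_in v w \<longleftrightarrow> ends_in_seq v (map fst w)"

lemma map_fst_proj: "map fst (proj u v w) = filter (\<lambda>x. x = u \<or> x = v) (map fst w)"
  by (simp add: proj_def filter_map o_def)

lemma ends_in_seq_cong:
  assumes "\<And>x. (x, v) \<notin> E \<Longrightarrow> filter (\<lambda>y. y = x \<or> y = v) vs = filter (\<lambda>y. y = x \<or> y = v) vs'"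
  shows "ends_in_seq v vs = ends_in_seq v vs'"
proof -
  have "filter (\<lambda>y. y = v \<or> y = v) vs = filter (\<lambda>y. y = v \<or> y = v) vs'" using assms[of v] by simp
  moreover have "\<And>ws. (v \<in> set ws) = (filter (\<lambda>y. y = v) ws \<noteq> [])" by (auto simp: filter_empty_conv)
  ultimately have "(v \<in> set vs) = (v \<in> set vs')" by simp
  then show ?thesis unfolding ends_in_seq_def using assms by auto
qed

lemma ends_in_cong:
  assumes "\<And>x. (x, v) \<notin> E \<Longrightarrow> proj x v w = proj x v w'"
  shows "ends_in v w = ends_in v w'"
  unfolding ends_in_def
  by (rule ends_in_seq_cong) (metis assms map_fst_proj)

lemma ends_in_proj_eq: "proj_eq w w' \<Longrightarrow> ends_in v w = ends_in v w'"
  by (rule ends_in_cong) (simp add: proj_eq_def)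

lemma ends_in_seq_append_blocked:
  assumes "\<exists>y\<in>set bs. (y, u) \<notin> E"
  shows "ends_in_seq u (as @ bs) = ends_in_seq u bs"
proof -
  obtain y where y: "y \<in> set bs" "(y, u) \<notin> E" using assms by blast
  show ?thesis
  proof
    assume a: "ends_in_seq u (as @ bs)"
    have ne: "filter (\<lambda>x. x = y \<or> x = u) bs \<noteq> []" using y by (auto simp: filter_empty_conv)
    have "last (filter (\<lambda>x. x = y \<or> x = u) (as @ bs)) = u" using a y unfolding ends_in_seq_def
      by blast
    then have "last (filter (\<lambda>x. x = y \<or> x = u) bs) = u" using ne by simp
    then have "u \<in> set bs" using ne by (metis filter_is_subset last_in_set subsetD)
    moreover have "last (filter (\<lambda>x. x = u' \<or> x = u) bs) = u" if "(u', u) \<notin> E" for u'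
    proof -
      have "filter (\<lambda>x. x = u' \<or> x = u) bs \<noteq> []" using \<open>u \<in> set bs\<close>
        by (auto simp: filter_empty_conv)
      then show ?thesis using a that unfolding ends_in_seq_def by force
    qed
    ultimately show "ends_in_seq u bs" unfolding ends_in_seq_def by blast
  next
    assume a: "ends_in_seq u bs"
    have "last (filter (\<lambda>x. x = u' \<or> x = u) (as @ bs)) = u" if "(u', u) \<notin> E" for u'
    proof -
      have "filter (\<lambda>x. x = u' \<or> x = u) bs \<noteq> []" using a
        by (auto simp: filter_empty_conv ends_in_seq_def)
      then show ?thesis using a that unfolding ends_in_seq_def by force
    qed
    then show "ends_in_seq u (as @ bs)" using a unfolding ends_in_seq_def by auto
  qed
qed

lemma ends_in_seq_append_commuting:
  assumes "\<forall>y\<in>set bs. (y, u) \<in> E"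
  shows "ends_in_seq u (as @ bs) = ends_in_seq u as"
proof (rule ends_in_seq_cong)
  fix x assume "(x, u) \<notin> E"
  then have "filter (\<lambda>y. y = x \<or> y = u) bs = []" using assms by (auto simp: filter_empty_conv)
  then show "filter (\<lambda>y. y = x \<or> y = u) (as @ bs) = filter (\<lambda>y. y = x \<or> y = u) as" by simp
qed

lemma ends_in_seq_insert_commuting:
  assumes "(v, u) \<in> E"
  shows "ends_in_seq u (ps @ v # qs) = ends_in_seq u (ps @ qs)"
proof (rule ends_in_seq_cong)
  fix x assume "(x, u) \<notin> E"
  then have "\<not> (v = x \<or> v = u)" using assms by auto
  then show "filter (\<lambda>y. y = x \<or> y = u) (ps @ v # qs) = filter (\<lambda>y. y = x \<or> y = u) (ps @ qs)"
    by simp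
qed

lemma ends_in_insert_commuting: "(v, u) \<in> E \<Longrightarrow> ends_in u (a @ [(v, n)] @ b) = ends_in u (a @ b)"
  unfolding ends_in_def using ends_in_seq_insert_commuting[of v u "map fst a" "map fst b"] by simp

lemma ends_in_seq_snoc: "ends_in_seq u (vs @ [u])"
  unfolding ends_in_seq_def by simp

lemma ends_in_snoc[simp]: "ends_in v (w @ [(v, k)])"
  by (simp add: ends_in_def ends_in_seq_snoc)

lemma ends_in_map_fst: "map fst w = map fst w' \<Longrightarrow> ends_in v w = ends_in v w'"
  by (simp add: ends_in_def)

fun del_first :: "'v \<Rightarrow> ('v \<times> 'a) list \<Rightarrow> ('v \<times> 'a) list" where
  "del_first v [] = []"
| "del_first v (x # xs) = (if fst x = v then xs else x # del_first v xs)"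

definition del_last :: "'v \<Rightarrow> ('v \<times> 'a) list \<Rightarrow> ('v \<times> 'a) list" where
  "del_last v w = rev (del_first v (rev w))"

definition last_entry :: "'v \<Rightarrow> ('v \<times> 'a) list \<Rightarrow> 'a" where
  "last_entry v w = snd (last (filter (\<lambda>x. fst x = v) w))"

lemma del_first_split: "(\<forall>y\<in>set ys. fst y \<noteq> v) \<Longrightarrow> fst x = v \<Longrightarrow> del_first v (ys @ x # zs) = ys @ zs"
  by (induction ys) auto

lemma del_first_append: "(\<forall>y\<in>set ys. fst y \<noteq> v) \<Longrightarrow> del_first v (ys @ zs) = ys @ del_first v zs"
  by (induction ys) auto

lemma del_last_split: "(\<forall>y\<in>set b. fst y \<noteq> v) \<Longrightarrow> fst x = v \<Longrightarrow> del_last v (a @ x # b) = a @ b"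
  unfolding del_last_def by (simp add: del_first_split)

lemma del_last_append: "(\<forall>y\<in>set b. fst y \<noteq> v) \<Longrightarrow> del_last v (a @ b) = del_last v a @ b"
  unfolding del_last_def by (simp add: del_first_append)

lemma del_last_snoc[simp]: "del_last v (w @ [(v, k)]) = w"
  using del_last_split[of "[]" v "(v, k)" w] by simp

lemma last_entry_snoc[simp]: "last_entry v (w @ [(v, k)]) = k"
  by (simp add: last_entry_def)

lemma last_entry_cong: "proj v v w = proj v v w' \<Longrightarrow> last_entry v w = last_entry v w'"
  by (simp add: last_entry_def proj_same)

lemma last_entry_proj_eq: "proj_eq w w' \<Longrightarrow> last_entry v w = last_entry v w'"
  by (rule last_entry_cong) (simp add: proj_eq_def)

lemma ends_in_split:
  assumes "ends_in v w"
  shows "\<exists>a n b. w = a @ [(v, n)] @ b \<and> (\<forall>y\<in>set b. (fst y, v) \<in> E) \<and> del_last v w = a @ b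
      \<and> last_entry v w = n"
proof -
  have "v \<in> set (map fst w)" using assms by (simp add: ends_in_def ends_in_seq_def)
  then have "\<exists>x\<in>set w. fst x = v" by auto
  then obtain a x b where w: "w = a @ x # b" and x: "fst x = v" and b: "\<forall>y\<in>set b. fst y \<noteq> v"
    using split_list_last_prop[of w "\<lambda>x. fst x = v"] by blast
  obtain n where xn: "x = (v, n)" using x by (cases x) auto
  have bE: "(fst y, v) \<in> E" if y: "y \<in> set b" for y
  proof (rule ccontr)
    assume nE: "(fst y, v) \<notin> E"
    let ?P = "\<lambda>z. z = fst y \<or> z = v"
    have l: "last (filter ?P (map fst w)) = v" using assms nE
      by (simp add: ends_in_def ends_in_seq_def)
    have ne: "filter ?P (map fst b) \<noteq> []" using y by (auto simp: filter_empty_conv)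
    have "last (filter ?P (map fst w)) = last (filter ?P (map fst b))" using ne w by simp
    moreover have "last (filter ?P (map fst b)) \<in> set (map fst b)" using ne
      by (metis filter_is_subset last_in_set subsetD)
    ultimately have "v \<in> fst ` set b" using l by auto
    then show False using b by auto
  qed
  have dlw: "del_last v w = a @ b" using w del_last_split[OF b x] by simp
  have lw: "last_entry v w = n"
  proof -
    have "filter (\<lambda>x. fst x = v) b = []" using b by (auto simp: filter_empty_conv)
    then show ?thesis using w xn by (simp add: last_entry_def)
  qed
  show ?thesis using w xn bE dlw lw by (intro exI[of _ a] exI[of _ n] exI[of _ b]) auto
qed

lemma proj_del_last_snoc:
  assumes "ends_in v w" "(x, v) \<notin> E"
  shows "proj x v w = proj x v (del_last v w) @ [(v, last_entry v w)]"
proof -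
  obtain a n b where w: "w = a @ [(v, n)] @ b" and b: "\<forall>y\<in>set b. (fst y, v) \<in> E"
    and d: "del_last v w = a @ b" and ln: "last_entry v w = n" using ends_in_split[OF assms(1)]
      by blast
  have "proj x v b = []" using proj_commuting_Nil[OF b assms(2)] .
  then show ?thesis using w d ln by (simp add: proj_def)
qed

section \<open>Reduced words and normal forms\<close>

fun mult_letter :: "('v \<times> 'a) list \<Rightarrow> ('v \<times> 'a) \<Rightarrow> ('v \<times> 'a) list" where
  "mult_letter w (v, m) =
     (if ends_in v w then (if last_entry v w \<otimes>\<^bsub>C v\<^esub> m = \<one>\<^bsub>C v\<^esub> then del_last v w
                      else del_last v w @ [(v, last_entry v w \<otimes>\<^bsub>C v\<^esub> m)])
     else if m = \<one>\<^bsub>C v\<^esub> then w else w @ [(v, m)])"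

declare mult_letter.simps [simp del]

definition proj_step :: "'v \<Rightarrow> ('v \<times> 'a) list \<Rightarrow> 'a \<Rightarrow> ('v \<times> 'a) list \<Rightarrow> ('v \<times> 'a) list" where
  "proj_step v w m p =
     (if ends_in v w then (if last_entry v w \<otimes>\<^bsub>C v\<^esub> m = \<one>\<^bsub>C v\<^esub> then butlast p
                      else butlast p @ [(v, last_entry v w \<otimes>\<^bsub>C v\<^esub> m)])
     else if m = \<one>\<^bsub>C v\<^esub> then p else p @ [(v, m)])"

lemma proj_mult_letter_same:
  assumes "(u, v) \<notin> E"
  shows "proj u v (mult_letter w (v, m)) = proj_step v w m (proj u v w)"
proof (cases "ends_in v w")
  case True
  then obtain a n b where w: "w = a @ [(v, n)] @ b" and b: "\<forall>y\<in>set b. (fst y, v) \<in> E"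
    and d: "del_last v w = a @ b" and ln: "last_entry v w = n" using ends_in_split by blast
  have pb: "proj u v b = []" using proj_commuting_Nil[OF b assms] .
  have pw: "proj u v w = proj u v a @ [(v, n)]" using w pb by (simp add: proj_def)
  show ?thesis using True d ln pw pb by (simp add: mult_letter.simps proj_step_def proj_def)
next
  case False
  then show ?thesis by (simp add: mult_letter.simps proj_step_def proj_def)
qed

lemma proj_mult_letter_other:
  assumes "v \<noteq> u" "v \<noteq> u'"
  shows "proj u u' (mult_letter w (v, m)) = proj u u' w"
proof (cases "ends_in v w")
  case True
  then obtain a n b where w: "w = a @ [(v, n)] @ b"
    and d: "del_last v w = a @ b" using ends_in_split by blast
  show ?thesis using True d w assms by (simp add: mult_letter.simps proj_def)
next
  case False
  then show ?thesis using assms by (simp add: mult_letter.simps proj_def)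
qed

lemma mult_letter_proj_eq:
  assumes P: "proj_eq w w'"
  shows "proj_eq (mult_letter w l) (mult_letter w' l)"
proof -
  obtain v m where l: "l = (v, m)" by (cases l)
  have step: "proj_step v w m p = proj_step v w' m p" for p
    using ends_in_proj_eq[OF P] last_entry_proj_eq[OF P] by (simp add: proj_step_def)
  have pw: "proj u u' w = proj u u' w'" if "(u, u') \<notin> E" for u u' using P that
    by (simp add: proj_eq_def)
  show ?thesis unfolding l
  proof (rule proj_eqI_at_vertex)
    fix x assume "(x, v) \<notin> E"
    then show "proj x v (mult_letter w (v, m)) = proj x v (mult_letter w' (v, m))"
      using pw step by (simp add: proj_mult_letter_same)
  next
    fix u u' assume "(u, u') \<notin> E" "u \<noteq> v" "u' \<noteq> v"
    then show "proj u u' (mult_letter w (v, m)) = proj u u' (mult_letter w' (v, m))"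
      using pw by (simp add: proj_mult_letter_other)
  qed
qed

definition reduced :: "('v \<times> 'a) list \<Rightarrow> bool" where
  "reduced w \<longleftrightarrow> w \<in> lists letters \<and> (\<forall>x\<in>set w. snd x \<noteq> \<one>\<^bsub>C (fst x)\<^esub>) \<and>
            (\<forall>p l q. w = p @ [l] @ q \<longrightarrow> \<not> ends_in (fst l) p)"

lemma reduced_Nil[simp]: "reduced []"
  by (simp add: reduced_def)

lemma reduced_lists: "reduced w \<Longrightarrow> w \<in> lists letters"
  by (simp add: reduced_def)

lemma reduced_prefix:
  assumes "reduced (x @ y)" shows "reduced x"
proof -
  have "\<not> ends_in (fst l) p" if "x = p @ [l] @ q" for p l q
  proof -
    have "x @ y = p @ [l] @ (q @ y)" using that by simp
    then show ?thesis using assms unfolding reduced_def by blast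
  qed
  moreover have "x \<in> lists letters" using assms by (simp add: reduced_def)
  moreover have "\<forall>z\<in>set x. snd z \<noteq> \<one>\<^bsub>C (fst z)\<^esub>" using assms by (simp add: reduced_def)
  ultimately show ?thesis unfolding reduced_def by blast
qed

lemma reduced_snoc:
  assumes "reduced w" "\<not> ends_in v w" "v \<in> V" "m \<in> carrier (C v)" "m \<noteq> \<one>\<^bsub>C v\<^esub>"
  shows "reduced (w @ [(v, m)])"
proof -
  have "\<not> ends_in (fst l) p" if e: "w @ [(v, m)] = p @ [l] @ q" for p l q
  proof (cases q rule: rev_exhaust)
    case Nil
    then show ?thesis using e assms(2) by force
  next
    case (snoc q' x)
    then have "w = p @ [l] @ q'" using e by simp
    then show ?thesis using assms(1) unfolding reduced_def by blast
  qed
  then show ?thesis using assms by (auto simp: reduced_def)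
qed

lemma reduced_delete_commuting_suffix_letter:
  assumes R: "reduced (a @ [(v, n)] @ b)" and b: "\<forall>y\<in>set b. (fst y, v) \<in> E"
  shows "reduced (a @ b)"
proof -
  have "\<not> ends_in (fst l) p" if pq: "a @ b = p @ [l] @ q" for p l q
  proof -
    from pq obtain us where "(a = p @ us \<and> us @ b = [l] @ q) \<or> (a @ us = p \<and> b = us @ [l] @ q)"
      unfolding append_eq_append_conv2 by auto
    then show ?thesis
    proof
      assume A: "a = p @ us \<and> us @ b = [l] @ q"
      show ?thesis
      proof (cases us)
        case Nil
        then have bl: "b = l # q" and pa: "p = a" using A by auto
        have "(v, fst l) \<in> E" using b bl E_sym by simp
        then have "ends_in (fst l) (a @ [(v, n)] @ []) = ends_in (fst l) (a @ [])"
          by (rule ends_in_insert_commuting)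
        moreover have "\<not> ends_in (fst l) (a @ [(v, n)])" using R bl unfolding reduced_def
          by (metis append.assoc append_Cons append_Nil)
        ultimately show ?thesis using pa by simp
      next
        case (Cons l' us')
        then have "a @ [(v, n)] @ b = p @ [l] @ (us' @ [(v, n)] @ b)" using A by auto
        then show ?thesis using R unfolding reduced_def by blast
      qed
    next
      assume B: "a @ us = p \<and> b = us @ [l] @ q"
      have "(v, fst l) \<in> E" using b B E_sym by simp
      then have "ends_in (fst l) (a @ [(v, n)] @ us) = ends_in (fst l) (a @ us)"
        by (rule ends_in_insert_commuting)
      moreover have "a @ [(v, n)] @ b = (a @ [(v, n)] @ us) @ [l] @ q" using B by simp
      then have "\<not> ends_in (fst l) (a @ [(v, n)] @ us)" using R unfolding reduced_def by blast
      ultimately show ?thesis using B by simp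
    qed
  qed
  then show ?thesis using R unfolding reduced_def by auto
qed

lemma reduced_del_last:
  assumes R: "reduced w" and e: "ends_in v w"
  shows "reduced (del_last v w) \<and> \<not> ends_in v (del_last v w)"
proof -
  obtain a n b where w: "w = a @ [(v, n)] @ b" and b: "\<forall>y\<in>set b. (fst y, v) \<in> E"
    and d: "del_last v w = a @ b" using ends_in_split[OF e] by blast
  have "\<not> ends_in v a" using R w unfolding reduced_def by fastforce
  moreover have "ends_in v (a @ b) = ends_in v a"
    unfolding ends_in_def using ends_in_seq_append_commuting[of "map fst b" v "map fst a"] b by auto
  ultimately show ?thesis using reduced_delete_commuting_suffix_letter R w b d by simp
qed

lemma reduced_last_entry:
  assumes R: "reduced w" and e: "ends_in v w"
  shows "last_entry v w \<in> carrier (C v) \<and> last_entry v w \<noteq> \<one>\<^bsub>C v\<^esub> \<and> v \<in> V"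
proof -
  obtain a n b where "w = a @ [(v, n)] @ b" "last_entry v w = n"
    using ends_in_split[OF e] by blast
  then show ?thesis using R unfolding reduced_def by auto
qed

lemma reduced_mult_letter:
  assumes R: "reduced w" and l: "l \<in> letters"
  shows "reduced (mult_letter w l)"
proof -
  obtain v m where vm: "l = (v, m)" by (cases l)
  show ?thesis
  proof (cases "ends_in v w")
    case True
    note del_last = reduced_del_last[OF R True]
    note ln = reduced_last_entry[OF R True]
    have "last_entry v w \<otimes>\<^bsub>C v\<^esub> m \<in> carrier (C v)" using ln l vm monoid.m_closed[OF monoid_C]
      by auto
    then show ?thesis
      using True del_last ln vm reduced_snoc[of "del_last v w" v "last_entry v w \<otimes>\<^bsub>C v\<^esub> m"]
      by (simp add: mult_letter.simps)
  next
    case False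
    then show ?thesis using R l vm reduced_snoc[of w v m] by (simp add: mult_letter.simps)
  qed
qed

lemma reduced_foldl: "reduced w \<Longrightarrow> x \<in> lists letters \<Longrightarrow> reduced (foldl mult_letter w x)"
  by (induction x arbitrary: w) (auto intro: reduced_mult_letter)

lemma mult_letter_cong:
  assumes R: "reduced w" and l: "(v, m) \<in> letters"
  shows "cong (mult_letter w (v, m)) (w @ [(v, m)])"
proof (cases "ends_in v w")
  case True
  obtain a n b where w: "w = a @ [(v, n)] @ b" and b: "\<forall>y\<in>set b. (fst y, v) \<in> E"
    and d: "del_last v w = a @ b" and ln: "last_entry v w = n" using ends_in_split[OF True] by blast
  have vV: "v \<in> V" and mC: "m \<in> carrier (C v)" and nC: "n \<in> carrier (C v)"
    and ab: "a @ b \<in> lists letters" using l reduced_lists[OF R] w by auto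
  have "cong w ((a @ b) @ [(v, n)])" using cong_move_letter[of a v n b] ab b nC vV w by auto
  then have "cong (w @ [(v, m)]) ((a @ b) @ [(v, n), (v, m)])"
    using cong_append_right[of _ _ "[(v, m)]"] l by fastforce
  then have nm: "cong (w @ [(v, m)]) ((a @ b) @ [(v, n \<otimes>\<^bsub>C v\<^esub> m)])"
    using cong_trans cong_snoc_mult[OF ab vV nC mC] by blast
  show ?thesis
  proof (cases "n \<otimes>\<^bsub>C v\<^esub> m = \<one>\<^bsub>C v\<^esub>")
    case True
    then have "cong (w @ [(v, m)]) (a @ b)" using nm cong_trans cong_snoc_one[OF ab vV] by metis
    then show ?thesis using True \<open>ends_in v w\<close> d ln by (simp add: mult_letter.simps cong_sym)
  next
    case False
    then show ?thesis using nm \<open>ends_in v w\<close> d ln by (simp add: mult_letter.simps cong_sym)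
  qed
next
  case False
  then show ?thesis using cong_snoc_one[OF reduced_lists[OF R]] cong_refl reduced_lists[OF R] l
    by (auto simp: mult_letter.simps cong_sym)
qed

lemma foldl_mult_letter_cong: "reduced w \<Longrightarrow> x \<in> lists letters \<Longrightarrow> cong (foldl mult_letter w x) (w @ x)"
proof (induction x arbitrary: w)
  case Nil
  then show ?case by (simp add: cong_refl reduced_lists)
next
  case (Cons l x)
  obtain v m where l: "l = (v, m)" by (cases l)
  have R: "reduced (mult_letter w l)" using Cons reduced_mult_letter by simp
  have 1: "cong (foldl mult_letter (mult_letter w l) x) (mult_letter w l @ x)"
    using Cons.IH[OF R] Cons by simp
  have 2: "cong (mult_letter w l @ x) ((w @ [l]) @ x)"
    using Cons mult_letter_cong[of w v m] l by (intro cong_append_right) auto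
  show ?case using cong_trans[OF 1 2] by simp
qed

definition nf :: "('v \<times> 'a) list \<Rightarrow> ('v \<times> 'a) list" where
  "nf x = foldl mult_letter [] x"

lemma reduced_nf: "x \<in> lists letters \<Longrightarrow> reduced (nf x)"
  by (simp add: nf_def reduced_foldl)

lemma nf_cong: "x \<in> lists letters \<Longrightarrow> cong (nf x) x"
  using foldl_mult_letter_cong[of "[]" x] by (simp add: nf_def)

lemma nf_append: "nf (x @ y) = foldl mult_letter (nf x) y"
  by (simp add: nf_def)

lemma length_mult_letter: "length (mult_letter w l) \<le> Suc (length w)"
proof -
  obtain v m where l: "l = (v, m)" by (cases l)
  have "length (del_last v w) \<le> length w" if "ends_in v w"
    using ends_in_split[OF that] by fastforce
  then show ?thesis using l by (auto simp: mult_letter.simps)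
qed

lemma length_foldl_mult_letter: "length (foldl mult_letter w x) \<le> length w + length x"
proof (induction x arbitrary: w)
  case Nil then show ?case by simp
next
  case (Cons l x)
  have "length (foldl mult_letter (mult_letter w l) x) \<le> length (mult_letter w l) + length x"
    by (rule Cons.IH)
  then show ?case using length_mult_letter[of w l] by simp
qed

lemma length_nf: "length (nf x) \<le> length x"
  using length_foldl_mult_letter[of "[]" x] by (simp add: nf_def)

section \<open>The word problem\<close>

lemma mult_letter_one_proj_eq:
  assumes R: "reduced w" and vV: "v \<in> V"
  shows "proj_eq (mult_letter w (v, \<one>\<^bsub>C v\<^esub>)) w"
proof (cases "ends_in v w")
  case True
  obtain a n b where w: "w = a @ [(v, n)] @ b" and b: "\<forall>y\<in>set b. (fst y, v) \<in> E"
    and d: "del_last v w = a @ b" and ln: "last_entry v w = n" using ends_in_split[OF True] by blast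
  have nC: "n \<in> carrier (C v)" "n \<noteq> \<one>\<^bsub>C v\<^esub>" using reduced_last_entry[OF R True] ln by auto
  have "n \<otimes>\<^bsub>C v\<^esub> \<one>\<^bsub>C v\<^esub> = n" using monoid.r_one[OF monoid_C[OF vV] nC(1)] .
  then have "mult_letter w (v, \<one>\<^bsub>C v\<^esub>) = a @ b @ [(v, n)]" using True d ln nC
    by (simp add: mult_letter.simps)
  then show ?thesis using proj_eq_move_letter[OF b, of a n] w proj_eq_sym by simp
next
  case False
  then show ?thesis by (simp add: mult_letter.simps)
qed

lemma mult_letter_mult:
  assumes R: "reduced w" and vV: "v \<in> V" and aC: "a \<in> carrier (C v)" and bC: "b \<in> carrier (C v)"
  shows "mult_letter (mult_letter w (v, a)) (v, b) = mult_letter w (v, a \<otimes>\<^bsub>C v\<^esub> b)"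
proof -
  interpret Cv: monoid "C v" using monoid_C[OF vV] .
  show ?thesis
  proof (cases "ends_in v w")
    case True
    note ln = reduced_last_entry[OF R True]
    note del_last = reduced_del_last[OF R True]
    let ?n = "last_entry v w"
    have as: "?n \<otimes>\<^bsub>C v\<^esub> (a \<otimes>\<^bsub>C v\<^esub> b) = (?n \<otimes>\<^bsub>C v\<^esub> a) \<otimes>\<^bsub>C v\<^esub> b"
      using ln aC bC by (simp add: Cv.m_assoc)
    show ?thesis
    proof (cases "?n \<otimes>\<^bsub>C v\<^esub> a = \<one>\<^bsub>C v\<^esub>")
      case True
      then have "?n \<otimes>\<^bsub>C v\<^esub> (a \<otimes>\<^bsub>C v\<^esub> b) = b" using as bC by simp
      then show ?thesis using True \<open>ends_in v w\<close> del_last by (simp add: mult_letter.simps)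
    next
      case False
      then show ?thesis using \<open>ends_in v w\<close> as by (simp add: mult_letter.simps)
    qed
  next
    case False
    then show ?thesis using bC by (cases "a = \<one>\<^bsub>C v\<^esub>") (simp_all add: mult_letter.simps)
  qed
qed

lemma ends_in_mult_letter_commuting:
  assumes "(u, v) \<in> E"
  shows "ends_in v (mult_letter w (u, m)) = ends_in v w
      \<and> last_entry v (mult_letter w (u, m)) = last_entry v w"
proof -
  have uv: "u \<noteq> v" using assms by auto
  have "proj x v (mult_letter w (u, m)) = proj x v w" if "(x, v) \<notin> E" for x
    using that assms uv by (intro proj_mult_letter_other) auto
  then have "ends_in v (mult_letter w (u, m)) = ends_in v w" by (intro ends_in_cong) auto
  moreover have "last_entry v (mult_letter w (u, m)) = last_entry v w" using uv
    by (intro last_entry_cong proj_mult_letter_other) auto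
  ultimately show ?thesis by simp
qed

lemma proj_mult_letter_commute:
  assumes uv: "(u, v) \<in> E" and xv: "(x, v) \<notin> E"
  shows "proj x v (mult_letter (mult_letter w (u, m)) (v, n)) =
    proj x v (mult_letter (mult_letter w (v, n)) (u, m))"
proof -
  have ux: "u \<noteq> x" "u \<noteq> v" using uv xv by auto
  have "proj x v (mult_letter (mult_letter w (u, m)) (v, n)) =
      proj_step v (mult_letter w (u, m)) n (proj x v (mult_letter w (u, m)))"
    using proj_mult_letter_same[OF xv] .
  also have "\<dots> = proj_step v w n (proj x v w)"
    using ends_in_mult_letter_commuting[OF uv] proj_mult_letter_other[of u x v w m] ux
      by (simp add: proj_step_def)
  also have "\<dots> = proj x v (mult_letter w (v, n))" using proj_mult_letter_same[OF xv] by simp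
  also have "\<dots> = proj x v (mult_letter (mult_letter w (v, n)) (u, m))"
    using proj_mult_letter_other[of u x v] ux by simp
  finally show ?thesis .
qed

lemma mult_letter_commute:
  assumes uv: "(u, v) \<in> E"
  shows "proj_eq (mult_letter (mult_letter w (u, m)) (v, n))
    (mult_letter (mult_letter w (v, n)) (u, m))"
proof (rule proj_eqI_at_vertex)
  fix x assume "(x, v) \<notin> E"
  then show "proj x v (mult_letter (mult_letter w (u, m)) (v, n)) =
      proj x v (mult_letter (mult_letter w (v, n)) (u, m))"
    by (rule proj_mult_letter_commute[OF uv])
next
  fix a b assume ab: "(a, b) \<notin> E" "a \<noteq> v" "b \<noteq> v"
  have vu: "(v, u) \<in> E" using E_sym uv .
  consider "b = u" | "a = u" | "a \<noteq> u" "b \<noteq> u" by blast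
  then show "proj a b (mult_letter (mult_letter w (u, m)) (v, n)) =
      proj a b (mult_letter (mult_letter w (v, n)) (u, m))"
  proof cases
    case 1
    then show ?thesis using proj_mult_letter_commute[OF vu, of a w n m] ab by simp
  next
    case 2
    moreover have "(b, u) \<notin> E" using ab 2 E_sym by blast
    ultimately show ?thesis using proj_mult_letter_commute[OF vu, of b w n m] proj_commute[of u b]
      by simp
  next
    case 3
    then show ?thesis using ab by (simp add: proj_mult_letter_other)
  qed
qed

lemma gp_basic_proj_eq:
  assumes R: "reduced w" and b: "gp_basic V E C r s"
  shows "proj_eq (foldl mult_letter w r) (foldl mult_letter w s)"
  using b
proof (cases rule: gp_basic.cases)
  case (unit v)
  then show ?thesis using mult_letter_one_proj_eq[OF R] by simp
next
  case (mult v a b)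
  then show ?thesis using mult_letter_mult[OF R] by simp
next
  case (comm u v m n)
  then show ?thesis using mult_letter_commute by simp
qed

lemma foldl_mult_letter_proj_eq: "proj_eq w w'
    \<Longrightarrow> proj_eq (foldl mult_letter w y) (foldl mult_letter w' y)"
  by (induction y arbitrary: w w') (auto intro: mult_letter_proj_eq)

lemma cong_imp_nf_proj_eq: "cong x y \<Longrightarrow> proj_eq (nf x) (nf y)"
proof (induction rule: gp_cong.induct)
  case (refl x) then show ?case by simp
next
  case (step x y r s)
  have R: "reduced (nf x)" using reduced_nf step by simp
  have "proj_eq (foldl mult_letter (nf x) r) (foldl mult_letter (nf x) s)"
    using gp_basic_proj_eq[OF R step(3)] .
  then have "proj_eq (foldl mult_letter (foldl mult_letter (nf x) r) y)
      (foldl mult_letter (foldl mult_letter (nf x) s) y)"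
    by (rule foldl_mult_letter_proj_eq)
  then show ?case by (simp add: nf_append)
next
  case (sym x y) then show ?case by (simp add: proj_eq_sym)
next
  case (trans x y z) then show ?case using proj_eq_trans by metis
qed

lemma proj_eq_imp_cong: "proj_eq w w' \<Longrightarrow> w \<in> lists letters \<Longrightarrow> w' \<in> lists letters \<Longrightarrow> cong w w'"
proof (induction w arbitrary: w' rule: rev_induct)
  case Nil
  then show ?case using proj_eq_Nil cong_refl by blast
next
  case (snoc x w)
  obtain v a where x: "x = (v, a)" by (cases x)
  have "ends_in v w'" "last_entry v w' = a"
    using ends_in_proj_eq[OF snoc.prems(1), of v] last_entry_proj_eq[OF snoc.prems(1), of v] x
      by auto
  then obtain c d where w': "w' = c @ [x] @ d" and d: "\<forall>y\<in>set d. (fst y, v) \<in> E"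
    using ends_in_split x by metis
  have cd: "c \<in> lists letters" "d \<in> lists letters" and xL: "x \<in> letters" using snoc.prems(3) w'
    by auto
  have "proj_eq w' ((c @ d) @ [x])" using proj_eq_move_letter[OF d] w' x by simp
  then have "proj_eq w (c @ d)" using proj_eq_trans[OF snoc.prems(1)] proj_eq_snoc_cancel by blast
  then have "cong w (c @ d)" using snoc.IH snoc.prems(2) cd by simp
  then have "cong (w @ [x]) ((c @ d) @ [x])" using cong_append_right[of w "c @ d" "[x]"] xL by simp
  moreover have "cong w' ((c @ d) @ [x])" using cong_move_letter[of c v a d] cd d x xL w'
    by auto
  ultimately show ?case using cong_trans[of "w @ [x]"] cong_sym by blast
qed

lemma cong_iff_nf_proj_eq: "x \<in> lists letters \<Longrightarrow> y \<in> lists letters \<Longrightarrow> cong x y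
    \<longleftrightarrow> proj_eq (nf x) (nf y)"
proof
  assume "cong x y" then show "proj_eq (nf x) (nf y)" by (rule cong_imp_nf_proj_eq)
next
  assume a: "proj_eq (nf x) (nf y)" "x \<in> lists letters" "y \<in> lists letters"
  have "cong (nf x) (nf y)" using proj_eq_imp_cong[OF a(1)] reduced_nf reduced_lists a by blast
  then show "cong x y" using nf_cong a by (meson cong_sym cong_trans)
qed

section \<open>Right cancellation\<close>

definition right_entry :: "'v \<Rightarrow> ('v \<times> 'a) list \<Rightarrow> 'a" where
  "right_entry v w = (if ends_in v w then last_entry v w else \<one>\<^bsub>C v\<^esub>)"

lemma right_entry_proj_eq: "proj_eq w w' \<Longrightarrow> right_entry v w = right_entry v w'"
  by (simp add: right_entry_def ends_in_proj_eq[of w w'] last_entry_proj_eq[of w w'])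

lemma right_entry_carrier: "reduced w \<Longrightarrow> v \<in> V \<Longrightarrow> right_entry v w \<in> carrier (C v)"
  using reduced_last_entry monoid.one_closed[OF monoid_C] by (auto simp: right_entry_def)

lemma right_entry_eq_one_iff: "reduced w \<Longrightarrow> right_entry v w = \<one>\<^bsub>C v\<^esub> \<longleftrightarrow> \<not> ends_in v w"
  using reduced_last_entry by (auto simp: right_entry_def)

lemma right_entry_mult_letter:
  assumes R: "reduced w" and l: "(v, t) \<in> letters"
  shows "right_entry v (mult_letter w (v, t)) = right_entry v w \<otimes>\<^bsub>C v\<^esub> t"
proof -
  have vV: "v \<in> V" and tC: "t \<in> carrier (C v)" using l by auto
  show ?thesis
  proof (cases "ends_in v w")
    case True
    note dl = reduced_del_last[OF R True]
    show ?thesis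
    proof (cases "last_entry v w \<otimes>\<^bsub>C v\<^esub> t = \<one>\<^bsub>C v\<^esub>")
      case True then show ?thesis using \<open>ends_in v w\<close> dl
        by (simp add: mult_letter.simps right_entry_def)
    next
      case False then show ?thesis using \<open>ends_in v w\<close>
        by (simp add: mult_letter.simps right_entry_def)
    qed
  next
    case False
    then show ?thesis using tC monoid.l_one[OF monoid_C[OF vV]]
      by (simp add: mult_letter.simps right_entry_def)
  qed
qed

lemma right_entry_mult_letter_commuting: "(u, v) \<in> E
    \<Longrightarrow> right_entry v (mult_letter w (u, m)) = right_entry v w"
  using ends_in_mult_letter_commuting by (simp add: right_entry_def)

lemma right_entry_foldl_commuting: "\<forall>y\<in>set x. (fst y, v) \<in> E
    \<Longrightarrow> right_entry v (foldl mult_letter w x) = right_entry v w"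
proof (induction x arbitrary: w)
  case Nil then show ?case by simp
next
  case (Cons l x)
  obtain u m where l: "l = (u, m)" by (cases l)
  have "right_entry v (foldl mult_letter (mult_letter w l) x) = right_entry v (mult_letter w l)"
    using Cons by simp
  also have "\<dots> = right_entry v w" using right_entry_mult_letter_commuting[of u v w m] Cons.prems l
    by simp
  finally show ?case by simp
qed

text \<open>Right cancellation of a letter (v, m) is first done on the entry at the right end in
  C v; once that is known, each projection onto a pair {x, v} with x not adjacent to v
  determines the projection before multiplication.\<close>

lemma mult_letter_rcancel:
  assumes R1: "reduced w1" and R2: "reduced w2" and l: "(v, m) \<in> letters"
    and P: "proj_eq (mult_letter w1 (v, m)) (mult_letter w2 (v, m))"
  shows "proj_eq w1 w2"
proof -
  have vV: "v \<in> V" and mC: "m \<in> carrier (C v)" using l by auto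
  have "right_entry v w1 \<otimes>\<^bsub>C v\<^esub> m = right_entry v w2 \<otimes>\<^bsub>C v\<^esub> m"
    using right_entry_proj_eq[OF P] right_entry_mult_letter[OF R1 l]
      right_entry_mult_letter[OF R2 l]
    by simp
  then have entry: "right_entry v w1 = right_entry v w2"
    using C_rcancel[OF vV right_entry_carrier[OF R1 vV] right_entry_carrier[OF R2 vV] mC] by blast
  then have e: "ends_in v w1 = ends_in v w2"
    using right_entry_eq_one_iff[OF R1, of v] right_entry_eq_one_iff[OF R2, of v] by auto
  have n: "ends_in v w1 \<Longrightarrow> last_entry v w1 = last_entry v w2"
    using entry e by (simp add: right_entry_def)
  have same_v: "proj x v w1 = proj x v w2" if xv: "(x, v) \<notin> E" for x
  proof -
    have "proj x v (mult_letter w1 (v, m)) = proj x v (mult_letter w2 (v, m))"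
      using P xv unfolding proj_eq_def by blast
    then have step: "proj_step v w1 m (proj x v w1) = proj_step v w1 m (proj x v w2)"
      using e n by (simp add: proj_mult_letter_same[OF xv] proj_step_def)
    show ?thesis
    proof (cases "ends_in v w1")
      case True
      then show ?thesis
        using step proj_del_last_snoc[OF True xv] proj_del_last_snoc[OF _ xv, of w2] e n
        by (simp add: proj_step_def split: if_splits)
    next
      case False
      then show ?thesis using step by (simp add: proj_step_def split: if_splits)
    qed
  qed
  show ?thesis
  proof (rule proj_eqI_at_vertex[OF same_v])
    fix a b assume "(a, b) \<notin> E" "a \<noteq> v" "b \<noteq> v"
    moreover have "proj a b (mult_letter w1 (v, m)) = proj a b (mult_letter w2 (v, m))"
      using P \<open>(a, b) \<notin> E\<close> unfolding proj_eq_def by blast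
    ultimately show "proj a b w1 = proj a b w2" by (simp add: proj_mult_letter_other)
  qed
qed

lemma foldl_mult_letter_rcancel: "reduced w1 \<Longrightarrow> reduced w2 \<Longrightarrow> z \<in> lists letters
    \<Longrightarrow> proj_eq (foldl mult_letter w1 z) (foldl mult_letter w2 z) \<Longrightarrow> proj_eq w1 w2"
proof (induction z arbitrary: w1 w2)
  case Nil then show ?case by simp
next
  case (Cons l z)
  obtain v m where l: "l = (v, m)" by (cases l)
  have "proj_eq (mult_letter w1 l) (mult_letter w2 l)"
    using Cons.IH[of "mult_letter w1 l" "mult_letter w2 l"] Cons.prems reduced_mult_letter by simp
  then show ?case using mult_letter_rcancel[of w1 w2 v m] Cons.prems l by simp
qed

lemma cong_rcancel:
  assumes "x \<in> lists letters" "y \<in> lists letters" "z \<in> lists letters" "cong (x @ z) (y @ z)"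
  shows "cong x y"
proof -
  have "proj_eq (nf (x @ z)) (nf (y @ z))" using cong_imp_nf_proj_eq assms(4) by simp
  then have "proj_eq (foldl mult_letter (nf x) z) (foldl mult_letter (nf y) z)"
    by (simp add: nf_append)
  then have "proj_eq (nf x) (nf y)" using foldl_mult_letter_rcancel reduced_nf assms by blast
  then show ?thesis using cong_iff_nf_proj_eq assms by simp
qed

abbreviation GP where "GP \<equiv> graph_product V E C"

abbreviation cls where "cls \<equiv> gp_class V E C"

lemma carrier_GP: "carrier GP = cls ` lists letters"
  by (simp add: graph_product_def)

lemma one_GP: "\<one>\<^bsub>GP\<^esub> = cls []"
  by (simp add: graph_product_def)

lemma cls_eq_iff: "x \<in> lists letters \<Longrightarrow> y \<in> lists letters \<Longrightarrow> cls x = cls y \<longleftrightarrow> cong x y"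
proof
  assume a: "x \<in> lists letters" "y \<in> lists letters" "cls x = cls y"
  have "x \<in> cls x" using a(1) cong_refl by (simp add: gp_class_def)
  then have "x \<in> cls y" using a(3) by simp
  then show "cong x y" by (simp add: gp_class_def)
next
  assume "cong x y"
  then show "cls x = cls y" unfolding gp_class_def by (auto intro: cong_trans cong_sym)
qed

lemma mult_GP: "x \<in> lists letters \<Longrightarrow> y \<in> lists letters \<Longrightarrow> cls x \<otimes>\<^bsub>GP\<^esub> cls y = cls (x @ y)"
proof -
  assume a: "x \<in> lists letters" "y \<in> lists letters"
  have "(\<exists>x'\<in>cls x. \<exists>y'\<in>cls y. cong z (x' @ y')) \<longleftrightarrow> cong z (x @ y)" for z
  proof
    assume "\<exists>x'\<in>cls x. \<exists>y'\<in>cls y. cong z (x' @ y')"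
    then obtain x' y' where "cong x' x" "cong y' y" "cong z (x' @ y')" by (auto simp: gp_class_def)
    then show "cong z (x @ y)" by (meson cong_append cong_trans)
  next
    assume "cong z (x @ y)"
    moreover have "x \<in> cls x" "y \<in> cls y" using a cong_refl by (auto simp: gp_class_def)
    ultimately show "\<exists>x'\<in>cls x. \<exists>y'\<in>cls y. cong z (x' @ y')" by blast
  qed
  then show ?thesis by (simp add: graph_product_def gp_class_def)
qed

lemma monoid_GP: "monoid GP"
proof (rule monoidI)
  fix x y assume "x \<in> carrier GP" "y \<in> carrier GP"
  then obtain a b where "a \<in> lists letters" "b \<in> lists letters" "x = cls a" "y = cls b"
    by (auto simp: carrier_GP)
  then show "x \<otimes>\<^bsub>GP\<^esub> y \<in> carrier GP" using mult_GP[of a b] by (simp add: carrier_GP)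
next
  show "\<one>\<^bsub>GP\<^esub> \<in> carrier GP" by (auto simp: carrier_GP one_GP)
next
  fix x y z assume "x \<in> carrier GP" "y \<in> carrier GP" "z \<in> carrier GP"
  then obtain a b c where "a \<in> lists letters" "b \<in> lists letters" "c \<in> lists letters"
      "x = cls a" "y = cls b" "z = cls c"
    by (auto simp: carrier_GP)
  then show "x \<otimes>\<^bsub>GP\<^esub> y \<otimes>\<^bsub>GP\<^esub> z = x \<otimes>\<^bsub>GP\<^esub> (y \<otimes>\<^bsub>GP\<^esub> z)"
    using mult_GP[of a b] mult_GP[of b c] mult_GP[of "a @ b" c] mult_GP[of a "b @ c"] by simp
next
  fix x assume "x \<in> carrier GP"
  then obtain a where "a \<in> lists letters" "x = cls a" by (auto simp: carrier_GP)
  then show "\<one>\<^bsub>GP\<^esub> \<otimes>\<^bsub>GP\<^esub> x = x" using mult_GP[of "[]" a] by (simp add: one_GP)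
next
  fix x assume "x \<in> carrier GP"
  then obtain a where "a \<in> lists letters" "x = cls a" by (auto simp: carrier_GP)
  then show "x \<otimes>\<^bsub>GP\<^esub> \<one>\<^bsub>GP\<^esub> = x" using mult_GP[of a "[]"] by (simp add: one_GP)
qed

lemma right_cancellative_GP: "right_cancellative GP"
  unfolding right_cancellative_def
proof (intro ballI impI)
  fix a b c assume "a \<in> carrier GP" "b \<in> carrier GP" "c \<in> carrier GP" and e: "a \<otimes>\<^bsub>GP\<^esub> c = b \<otimes>\<^bsub>GP\<^esub> c"
  then obtain x y z where xyz: "x \<in> lists letters" "y \<in> lists letters" "z \<in> lists letters"
      "a = cls x" "b = cls y" "c = cls z"
    by (auto simp: carrier_GP)
  then have "cls (x @ z) = cls (y @ z)" using e by (simp add: mult_GP)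
  then have "cong (x @ z) (y @ z)" using xyz by (simp add: cls_eq_iff)
  then have "cong x y" using cong_rcancel xyz by blast
  then show "a = b" using xyz cls_eq_iff by simp
qed

definition lmult :: "('v \<times> 'a) list \<Rightarrow> ('v \<times> 'a) list set" where
  "lmult y = {z. z \<in> lists letters \<and> (\<exists>c\<in>lists letters. cong z (c @ y))}"

lemma lmult_lists: "lmult y \<subseteq> lists letters"
  by (auto simp: lmult_def)

lemma lmult_self: "m \<in> lists letters \<Longrightarrow> m \<in> lmult m"
  unfolding lmult_def using cong_refl[of m] by (intro CollectI conjI bexI[of _ "[]"]) auto

lemma lmult_Nil: "lmult [] = lists letters"
  unfolding lmult_def using cong_refl by auto

lemma lmult_closed_under_cong: "z \<in> lmult y \<Longrightarrow> cong z z' \<Longrightarrow> z' \<in> lmult y"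
proof -
  assume a: "z \<in> lmult y" "cong z z'"
  then obtain c where c: "c \<in> lists letters" "cong z (c @ y)" by (auto simp: lmult_def)
  have "cong z' (c @ y)" using cong_trans[OF cong_sym[OF a(2)] c(2)] .
  moreover have "z' \<in> lists letters" using cong_lists[OF a(2)] by simp
  ultimately show ?thesis using c(1) by (auto simp: lmult_def)
qed

lemma lmult_cong:
  assumes "cong x y" shows "lmult x = lmult y"
proof -
  have "lmult x \<subseteq> lmult y" if xy: "cong x y" for x y
  proof
    fix z assume "z \<in> lmult x"
    then obtain c where c: "c \<in> lists letters" "cong z (c @ x)" "z \<in> lists letters"
      by (auto simp: lmult_def)
    then have "cong z (c @ y)" using cong_trans[OF c(2) cong_append_left[OF xy c(1)]] by simp
    then show "z \<in> lmult y" using c unfolding lmult_def by blast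
  qed
  then show ?thesis using assms cong_sym by blast
qed

lemma principal_left_ideal_GP: "y \<in> lists letters \<Longrightarrow> principal_left_ideal GP (cls y) = cls ` lmult y"
proof -
  assume y: "y \<in> lists letters"
  show ?thesis
  proof
    show "principal_left_ideal GP (cls y) \<subseteq> cls ` lmult y"
    proof
      fix z assume "z \<in> principal_left_ideal GP (cls y)"
      then obtain c where c: "c \<in> lists letters" "z = cls c \<otimes>\<^bsub>GP\<^esub> cls y"
        by (auto simp: principal_left_ideal_def carrier_GP)
      then have "z = cls (c @ y)" using y by (simp add: mult_GP)
      moreover have "c @ y \<in> lists letters" using c y by simp
      then have "c @ y \<in> lmult y" using c cong_refl[of "c @ y"] unfolding lmult_def by blast
      ultimately show "z \<in> cls ` lmult y" by blast
    qed
  next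
    show "cls ` lmult y \<subseteq> principal_left_ideal GP (cls y)"
    proof
      fix z assume "z \<in> cls ` lmult y"
      then obtain z0 c where z: "z = cls z0" "z0 \<in> lists letters" "c \<in> lists letters"
          "cong z0 (c @ y)"
        by (auto simp: lmult_def)
      then have "z = cls (c @ y)" using cls_eq_iff y by simp
      also have "\<dots> = cls c \<otimes>\<^bsub>GP\<^esub> cls y" using z y by (simp add: mult_GP)
      finally show "z \<in> principal_left_ideal GP (cls y)"
        using z by (auto simp: principal_left_ideal_def carrier_GP)
    qed
  qed
qed

lemma image_cls_Int_lmult: "cls ` lmult a \<inter> cls ` lmult b = cls ` (lmult a \<inter> lmult b)"
proof
  show "cls ` lmult a \<inter> cls ` lmult b \<subseteq> cls ` (lmult a \<inter> lmult b)"
  proof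
    fix z assume "z \<in> cls ` lmult a \<inter> cls ` lmult b"
    then obtain p q where p: "p \<in> lmult a" "q \<in> lmult b" "z = cls p" "z = cls q" by blast
    have "p \<in> lists letters" "q \<in> lists letters" using p lmult_lists by auto
    then have "cong p q" using cls_eq_iff[of p q] p by simp
    then have "p \<in> lmult b" using p lmult_closed_under_cong cong_sym by blast
    then show "z \<in> cls ` (lmult a \<inter> lmult b)" using p by blast
  qed
qed blast

section \<open>Least common left multiples\<close>

definition right_part :: "'v \<Rightarrow> ('v \<times> 'a) list \<Rightarrow> 'a" where
  "right_part v z = right_entry v (nf z)"

lemma right_part_cong: "cong z z' \<Longrightarrow> right_part v z = right_part v z'"
  unfolding right_part_def by (rule right_entry_proj_eq) (rule cong_imp_nf_proj_eq)

lemma right_part_snoc: "z \<in> lists letters \<Longrightarrow> (v, t) \<in> letters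
    \<Longrightarrow> right_part v (z @ [(v, t)]) = right_part v z \<otimes>\<^bsub>C v\<^esub> t"
  unfolding right_part_def using right_entry_mult_letter[OF reduced_nf] by (simp add: nf_append)

lemma right_part_append_commuting: "\<forall>y\<in>set x. (fst y, v) \<in> E
    \<Longrightarrow> right_part v (z @ x) = right_part v z"
  unfolding right_part_def by (simp add: nf_append right_entry_foldl_commuting)

lemma right_part_carrier: "z \<in> lists letters \<Longrightarrow> v \<in> V \<Longrightarrow> right_part v z \<in> carrier (C v)"
  unfolding right_part_def using right_entry_carrier reduced_nf by blast

definition strip_right :: "'v \<Rightarrow> ('v \<times> 'a) list \<Rightarrow> ('v \<times> 'a) list" where
  "strip_right v w = (if ends_in v w then del_last v w else w)"

lemma cong_strip_right:
  assumes R: "reduced w" and vV: "v \<in> V"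
  shows "cong w (strip_right v w @ [(v, right_entry v w)])"
proof (cases "ends_in v w")
  case True
  obtain a n b where w: "w = a @ [(v, n)] @ b" and b: "\<forall>y\<in>set b. (fst y, v) \<in> E"
    and d: "del_last v w = a @ b" and ln: "last_entry v w = n" using ends_in_split[OF True] by blast
  have wl: "w \<in> lists letters" using R by (simp add: reduced_def)
  have "cong (a @ [(v, n)] @ b) (a @ b @ [(v, n)])"
    using wl w b by (intro cong_move_letter) auto
  then show ?thesis using True w d ln by (simp add: strip_right_def right_entry_def)
next
  case False
  then show ?thesis using cong_snoc_one[OF reduced_lists[OF R] vV]
    by (simp add: strip_right_def right_entry_def cong_sym)
qed

lemma length_strip_right:
  assumes "ends_in v w" shows "length (strip_right v w) < length w"
proof -
  obtain a n b where "w = a @ [(v, n)] @ b" "del_last v w = a @ b"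
    using ends_in_split[OF assms] by blast
  then show ?thesis using assms by (simp add: strip_right_def)
qed

lemma strip_right_lists: "reduced w \<Longrightarrow> strip_right v w \<in> lists letters"
  using reduced_del_last[of w v] by (auto simp: strip_right_def reduced_def)

lemma lmult_letter_iff:
  assumes l: "(v, b) \<in> letters"
  shows "z \<in> lmult [(v, b)] \<longleftrightarrow> z \<in> lists letters \<and> right_part v z \<in> principal_left_ideal (C v) b"
proof
  assume "z \<in> lmult [(v, b)]"
  then obtain c where c: "c \<in> lists letters" "cong z (c @ [(v, b)])" "z \<in> lists letters"
    by (auto simp: lmult_def)
  have "right_part v z = right_part v c \<otimes>\<^bsub>C v\<^esub> b"
    using right_part_cong[OF c(2)] right_part_snoc[OF c(1) l] by simp
  moreover have "right_part v c \<in> carrier (C v)" using right_part_carrier c l by simp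
  ultimately show "z \<in> lists letters \<and> right_part v z \<in> principal_left_ideal (C v) b"
    using c by (auto simp: principal_left_ideal_def)
next
  assume a: "z \<in> lists letters \<and> right_part v z \<in> principal_left_ideal (C v) b"
  then obtain c where c: "c \<in> carrier (C v)" "right_part v z = c \<otimes>\<^bsub>C v\<^esub> b"
    by (auto simp: principal_left_ideal_def)
  have vV: "v \<in> V" and bC: "b \<in> carrier (C v)" using l by auto
  let ?r = "nf z"
  have R: "reduced ?r" using reduced_nf a by simp
  note hl = strip_right_lists[OF R, of v]
  have 1: "cong z ?r" using nf_cong a cong_sym by blast
  have 2: "cong ?r (strip_right v ?r @ [(v, c \<otimes>\<^bsub>C v\<^esub> b)])" using cong_strip_right[OF R vV] c
    by (simp add: right_part_def)
  note 3 = cong_snoc_mult[OF hl vV c(1) bC]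
  have "cong z ((strip_right v ?r @ [(v, c)]) @ [(v, b)])"
    using cong_trans[OF cong_trans[OF 1 2] cong_sym[OF 3]] by simp
  moreover have "strip_right v ?r @ [(v, c)] \<in> lists letters" using hl c vV by simp
  ultimately show "z \<in> lmult [(v, b)]" using a unfolding lmult_def by blast
qed

lemma lmult_snoc:
  assumes p: "p \<in> lists letters" and l: "l \<in> letters"
  shows "{z. \<exists>w\<in>lmult p. cong z (w @ [l])} = lmult (p @ [l])"
proof
  show "{z. \<exists>w\<in>lmult p. cong z (w @ [l])} \<subseteq> lmult (p @ [l])"
  proof
    fix z assume "z \<in> {z. \<exists>w\<in>lmult p. cong z (w @ [l])}"
    then obtain w c where w: "cong z (w @ [l])" "c \<in> lists letters" "cong w (c @ p)"
      by (auto simp: lmult_def)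
    have "cong (w @ [l]) ((c @ p) @ [l])" using cong_append_right[OF w(3)] l by simp
    then have "cong z (c @ p @ [l])" using cong_trans[OF w(1)] by simp
    moreover have "z \<in> lists letters" using cong_lists[OF w(1)] by simp
    ultimately show "z \<in> lmult (p @ [l])" using w(2) unfolding lmult_def by blast
  qed
next
  show "lmult (p @ [l]) \<subseteq> {z. \<exists>w\<in>lmult p. cong z (w @ [l])}"
  proof
    fix z assume "z \<in> lmult (p @ [l])"
    then obtain c where c: "c \<in> lists letters" "cong z (c @ p @ [l])" by (auto simp: lmult_def)
    have "c @ p \<in> lmult p" using c p cong_refl[of "c @ p"] unfolding lmult_def by auto
    moreover have "cong z ((c @ p) @ [l])" using c by simp
    ultimately show "z \<in> {z. \<exists>w\<in>lmult p. cong z (w @ [l])}" by blast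
  qed
qed

lemma lmult_snoc_subset:
  assumes "y \<in> lists letters" shows "lmult (y @ [l]) \<subseteq> lmult [l]"
proof
  fix z assume "z \<in> lmult (y @ [l])"
  then obtain c where "c \<in> lists letters" "cong z ((c @ y) @ [l])" "z \<in> lists letters"
    by (auto simp: lmult_def)
  moreover have "c @ y \<in> lists letters" using calculation(1) assms by simp
  ultimately show "z \<in> lmult [l]" unfolding lmult_def by blast
qed

lemma lmult_Cons_unit:
  assumes s: "s \<in> lists letters" and l: "(u, g) \<in> letters" and g: "g \<in> Units (C u)"
  shows "lmult ((u, g) # s) = lmult s"
proof
  show "lmult ((u, g) # s) \<subseteq> lmult s"
  proof
    fix z assume "z \<in> lmult ((u, g) # s)"
    then obtain c where c: "c \<in> lists letters" "cong z (c @ (u, g) # s)" "z \<in> lists letters"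
      by (auto simp: lmult_def)
    have "c @ [(u, g)] \<in> lists letters" using c l by simp
    moreover have "cong z ((c @ [(u, g)]) @ s)" using c by simp
    ultimately show "z \<in> lmult s" using c unfolding lmult_def by blast
  qed
next
  show "lmult s \<subseteq> lmult ((u, g) # s)"
  proof
    fix z assume "z \<in> lmult s"
    then obtain c where c: "c \<in> lists letters" "cong z (c @ s)" "z \<in> lists letters"
      by (auto simp: lmult_def)
    have uV: "u \<in> V" and gC: "g \<in> carrier (C u)" using l by auto
    interpret Cu: monoid "C u" using monoid_C[OF uV] .
    obtain g' where g': "g' \<in> carrier (C u)" "g' \<otimes>\<^bsub>C u\<^esub> g = \<one>\<^bsub>C u\<^esub>"
      using Cu.Units_l_inv_ex[OF g] by blast
    have "cong (c @ [(u, g'), (u, g)]) c"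
      using cong_trans[OF cong_snoc_mult[OF c(1) uV g'(1) gC]] cong_snoc_one[OF c(1) uV] g'(2)
        by simp
    then have "cong ((c @ [(u, g'), (u, g)]) @ s) (c @ s)" using cong_append_right s by blast
    then have "cong z ((c @ [(u, g')]) @ (u, g) # s)" using cong_trans[OF c(2)] cong_sym
      by fastforce
    moreover have "c @ [(u, g')] \<in> lists letters" using c g' uV by simp
    ultimately show "z \<in> lmult ((u, g) # s)" using c unfolding lmult_def by blast
  qed
qed

lemma lmult_drop_front_unit:
  assumes r: "r \<in> lists letters" "r = p @ [(u, g)] @ q" and commuting: "\<forall>y\<in>set p. (fst y, u) \<in> E"
    and g: "g \<in> Units (C u)"
  shows "lmult r = lmult (p @ q)"
proof -
  have pq: "p \<in> lists letters" "q \<in> lists letters" and ug: "(u, g) \<in> letters" using r by auto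
  have "cong ([] @ [(u, g)] @ p) ([] @ p @ [(u, g)])"
    using pq ug commuting by (intro cong_move_letter) auto
  then have "cong ((u, g) # (p @ q)) r" using cong_append_right[OF _ pq(2)] r(2) by fastforce
  then have "lmult r = lmult ((u, g) # (p @ q))" using lmult_cong cong_sym by blast
  also have "\<dots> = lmult (p @ q)" using lmult_Cons_unit pq ug g by simp
  finally show ?thesis .
qed

definition no_front_unit :: "('v \<times> 'a) list \<Rightarrow> bool" where
  "no_front_unit x \<longleftrightarrow>
     (\<forall>p l q. x = p @ [l] @ q \<longrightarrow> (\<forall>y\<in>set p. (fst y, fst l) \<in> E) \<longrightarrow>
        snd l \<notin> Units (C (fst l)))"

lemma no_front_unit_prefix:
  assumes "no_front_unit (x @ y)" shows "no_front_unit x"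
  unfolding no_front_unit_def
proof (intro allI impI)
  fix p l q assume "x = p @ [l] @ q" "\<forall>y\<in>set p. (fst y, fst l) \<in> E"
  moreover have "x @ y = p @ [l] @ (q @ y)" using calculation by simp
  ultimately show "snd l \<notin> Units (C (fst l))" using assms unfolding no_front_unit_def by blast
qed

lemma mult_letter_append_suffix:
  assumes w: "w \<in> lists letters" and l: "(u, n) \<in> letters" "n \<noteq> \<one>\<^bsub>C u\<^esub>"
    and blocked: "ends_in u (w @ x) \<Longrightarrow> (\<forall>y\<in>set x. (fst y, u) \<in> E) \<and> n \<notin> Units (C u)"
  obtains w' n' where "w' \<in> lists letters" "mult_letter (w @ x) (u, n) = w' @ x @ [(u, n')]"
proof (cases "ends_in u (w @ x)")
  case False
  then show thesis using that[OF w] l by (simp add: mult_letter.simps)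
next
  case True
  then have commuting: "\<forall>y\<in>set x. (fst y, u) \<in> E" and nU: "n \<notin> Units (C u)" using blocked by auto
  then have "ends_in u w" using True ends_in_seq_append_commuting[of "map fst x" u "map fst w"]
    by (simp add: ends_in_def)
  then obtain a k b where wab: "w = a @ [(u, k)] @ b" "del_last u w = a @ b" "last_entry u w = k"
    using ends_in_split by blast
  have not_u: "\<forall>y\<in>set x. fst y \<noteq> u" using commuting by auto
  then have "filter (\<lambda>y. fst y = u) x = []" by (simp add: filter_empty_conv)
  then have last: "last_entry u (w @ x) = k" using wab(3) by (simp add: last_entry_def)
  have uV: "u \<in> V" and kC: "k \<in> carrier (C u)" and nC: "n \<in> carrier (C u)" using w wab(1) l by auto
  have "k \<otimes>\<^bsub>C u\<^esub> n \<noteq> \<one>\<^bsub>C u\<^esub>"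
    using monoid.Units_of_l_inv_rcancel[OF monoid_C right_cancellative_C, OF uV uV kC nC] nU
      by blast
  then have "mult_letter (w @ x) (u, n) = (a @ b) @ x @ [(u, k \<otimes>\<^bsub>C u\<^esub> n)]"
    using True last del_last_append[OF not_u] wab(2) by (simp add: mult_letter.simps)
  moreover have "a @ b \<in> lists letters" using w wab(1) by simp
  ultimately show thesis using that by blast
qed

lemma foldl_mult_letter_no_front_unit:
  assumes "reduced w" "reduced x" "no_front_unit x"
  shows "\<exists>w' x'. proj_eq (foldl mult_letter w x) (w' @ x') \<and> map fst x' = map fst x
      \<and> w' \<in> lists letters"
  using assms(2,3)
proof (induction x rule: rev_induct)
  case Nil
  then show ?case using assms(1) reduced_lists by (intro exI[of _ w] exI[of _ "[]"]) simp
next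
  case (snoc l x)
  obtain u n where l: "l = (u, n)" by (cases l)
  have R: "reduced (x @ [(u, n)])" and U: "no_front_unit (x @ [(u, n)])" using snoc.prems l
    by simp_all
  obtain w' x' where IH: "proj_eq (foldl mult_letter w x) (w' @ x')" "map fst x' = map fst x"
      "w' \<in> lists letters"
    using snoc.IH reduced_prefix[OF R] no_front_unit_prefix[OF U] by blast
  have not_ends_in: "\<not> ends_in u x" using R unfolding reduced_def by force
  have n: "(u, n) \<in> letters" "n \<noteq> \<one>\<^bsub>C u\<^esub>" using R unfolding reduced_def by auto
  have "(\<forall>y\<in>set x'. (fst y, u) \<in> E) \<and> n \<notin> Units (C u)" if e: "ends_in u (w' @ x')"
  proof
    show commuting: "\<forall>y\<in>set x'. (fst y, u) \<in> E"
    proof (rule ccontr)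
      assume "\<not> (\<forall>y\<in>set x'. (fst y, u) \<in> E)"
      then have "ends_in u (w' @ x') = ends_in u x"
        using ends_in_seq_append_blocked[of "map fst x'" u "map fst w'"] ends_in_map_fst[OF IH(2)]
        by (auto simp: ends_in_def)
      then show False using e not_ends_in by simp
    qed
    have "(fst y, u) \<in> E" if "y \<in> set x" for y
    proof -
      have "fst y \<in> fst ` set x'" using that IH(2) by (metis image_eqI list.set_map)
      then show ?thesis using commuting by auto
    qed
    then have "\<forall>y\<in>set x. (fst y, u) \<in> E" by blast
    then show "n \<notin> Units (C u)" using U unfolding no_front_unit_def by fastforce
  qed
  then obtain w'' n' where "w'' \<in> lists letters"
      "mult_letter (w' @ x') (u, n) = w'' @ x' @ [(u, n')]"
    using mult_letter_append_suffix[OF IH(3) n] by blast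
  moreover have "proj_eq (foldl mult_letter w (x @ [l])) (mult_letter (w' @ x') (u, n))"
    using mult_letter_proj_eq[OF IH(1)] l by simp
  ultimately show ?case using IH(2) l by (intro exI[of _ w''] exI[of _ "x' @ [(u, n')]"]) simp
qed

lemma right_entry_blocked:
  assumes "reduced r" "no_front_unit r" "\<not> ends_in v r" "\<exists>y\<in>set r. (fst y, v) \<notin> E" "reduced w"
  shows "right_entry v (foldl mult_letter w r) = \<one>\<^bsub>C v\<^esub>"
proof -
  obtain w' x' where W: "proj_eq (foldl mult_letter w r) (w' @ x')" "map fst x' = map fst r"
    using foldl_mult_letter_no_front_unit[OF assms(5,1,2)] by blast
  obtain y where y: "y \<in> set r" "(fst y, v) \<notin> E" using assms(4) by blast
  have "fst y \<in> set (map fst x')" using y W(2) by (metis image_eqI list.set_map)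
  then have "\<exists>y\<in>set (map fst x'). (y, v) \<notin> E" using y by blast
  then have "ends_in v (w' @ x') = ends_in v x'" unfolding ends_in_def
    using ends_in_seq_append_blocked by simp
  also have "\<dots> = ends_in v r" using W(2) by (rule ends_in_map_fst)
  finally have "\<not> ends_in v (foldl mult_letter w r)" using ends_in_proj_eq[OF W(1)] assms(3) by simp
  then show ?thesis by (simp add: right_entry_def)
qed

definition lmult_Int_principal :: "('v \<times> 'a) list \<Rightarrow> ('v \<times> 'a) list \<Rightarrow> bool" where
  "lmult_Int_principal x y \<longleftrightarrow>
     lmult x \<inter> lmult y = {} \<or> (\<exists>m\<in>lists letters. lmult x \<inter> lmult y = lmult m)"

lemma lmult_Int_principal_snoc_image:
  assumes l: "l \<in> letters" and ab: "lmult_Int_principal a b"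
    and S: "S = {z. \<exists>w\<in>lmult a \<inter> lmult b. cong z (w @ [l])}"
  shows "S = {} \<or> (\<exists>m\<in>lists letters. S = lmult m)"
proof -
  from ab consider "lmult a \<inter> lmult b = {}"
    | m where "m \<in> lists letters" "lmult a \<inter> lmult b = lmult m"
    unfolding lmult_Int_principal_def by blast
  then show ?thesis
  proof cases
    case 1
    then show ?thesis using S by simp
  next
    case (2 m)
    then have "S = lmult (m @ [l])" using S lmult_snoc[OF 2(1) l] by simp
    moreover have "m @ [l] \<in> lists letters" using 2 l by simp
    ultimately show ?thesis by blast
  qed
qed

lemma lmult_snoc_Int_letter:
  assumes x: "x \<in> lists letters" and t: "(v, t) \<in> letters" and b: "(v, b) \<in> letters"
  shows "lmult (x @ [(v, t)]) \<inter> lmult [(v, b)] =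
    {z. \<exists>y\<in>lmult x. cong z (y @ [(v, t)]) \<and>
          right_part v y \<otimes>\<^bsub>C v\<^esub> t \<in> principal_left_ideal (C v) b}"
proof (intro Set.set_eqI iffI)
  fix z assume z: "z \<in> lmult (x @ [(v, t)]) \<inter> lmult [(v, b)]"
  then obtain c where c: "c \<in> lists letters" "cong z ((c @ x) @ [(v, t)])" by (auto simp: lmult_def)
  have y: "c @ x \<in> lmult x" using c x cong_refl[of "c @ x"] unfolding lmult_def by auto
  have "right_part v z = right_part v (c @ x) \<otimes>\<^bsub>C v\<^esub> t"
    using right_part_cong[OF c(2)] right_part_snoc[of "c @ x" v t] c x t by simp
  then show "z \<in> {z. \<exists>y\<in>lmult x. cong z (y @ [(v, t)]) \<and>
      right_part v y \<otimes>\<^bsub>C v\<^esub> t \<in> principal_left_ideal (C v) b}"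
    using z lmult_letter_iff[OF b] y c(2) by (intro CollectI bexI[of _ "c @ x"]) auto
next
  fix z assume "z \<in> {z. \<exists>y\<in>lmult x. cong z (y @ [(v, t)]) \<and>
      right_part v y \<otimes>\<^bsub>C v\<^esub> t \<in> principal_left_ideal (C v) b}"
  then obtain y where y: "y \<in> lmult x" "cong z (y @ [(v, t)])"
    and Tb: "right_part v y \<otimes>\<^bsub>C v\<^esub> t \<in> principal_left_ideal (C v) b" by blast
  have "z \<in> lmult (x @ [(v, t)])" using lmult_snoc[OF x t] y by blast
  moreover have "right_part v z = right_part v y \<otimes>\<^bsub>C v\<^esub> t"
    using right_part_cong[OF y(2)] right_part_snoc[of y v t] y(1) t lmult_lists by auto
  ultimately show "z \<in> lmult (x @ [(v, t)]) \<inter> lmult [(v, b)]"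
    using Tb lmult_letter_iff[OF b] cong_lists[OF y(2)] by simp
qed

text \<open>A right-hand syllable (v, t) is peeled off with the help of the LCM property of C v:
  if C v t \<inter> C v b = C v (q t), then the problem reduces to x and the letter (v, q).\<close>

lemma lmult_Int_principal_snoc_letter:
  assumes x: "x \<in> lists letters" and t: "(v, t) \<in> letters" and b: "(v, b) \<in> letters"
    and IH: "\<And>q. (v, q) \<in> letters \<Longrightarrow> lmult_Int_principal x [(v, q)]"
  shows "lmult_Int_principal (x @ [(v, t)]) [(v, b)]"
proof -
  have vV: "v \<in> V" and tC: "t \<in> carrier (C v)" and bC: "b \<in> carrier (C v)" using t b by auto
  interpret Cv: monoid "C v" using monoid_C[OF vV] .
  let ?PL = "principal_left_ideal (C v)"
  have "?PL t \<inter> ?PL b = {} \<or> (\<exists>l\<in>carrier (C v). ?PL t \<inter> ?PL b = ?PL l)"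
    using LCM_C vV tC bC unfolding left_LCM_monoid_def by blast
  then show ?thesis
  proof
    assume disjoint: "?PL t \<inter> ?PL b = {}"
    have "right_part v y \<otimes>\<^bsub>C v\<^esub> t \<notin> ?PL b" if "y \<in> lmult x" for y
    proof -
      have "right_part v y \<in> carrier (C v)" using that lmult_lists right_part_carrier vV by blast
      then show ?thesis using disjoint unfolding principal_left_ideal_def by blast
    qed
    then show ?thesis
      unfolding lmult_Int_principal_def lmult_snoc_Int_letter[OF x t b] by blast
  next
    assume "\<exists>l\<in>carrier (C v). ?PL t \<inter> ?PL b = ?PL l"
    then obtain q where q: "q \<in> carrier (C v)"
      and quot: "\<And>s. s \<in> carrier (C v) \<Longrightarrow> s \<otimes>\<^bsub>C v\<^esub> t \<in> ?PL b \<longleftrightarrow> s \<in> ?PL q"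
      using Cv.principal_left_ideal_Int_quotient[OF right_cancellative_C[OF vV] tC] by blast
    have q': "(v, q) \<in> letters" using vV q by simp
    have "right_part v y \<otimes>\<^bsub>C v\<^esub> t \<in> ?PL b \<longleftrightarrow> y \<in> lmult [(v, q)]" if "y \<in> lmult x" for y
    proof -
      have "y \<in> lists letters" using that lmult_lists by blast
      then show ?thesis using quot right_part_carrier vV lmult_letter_iff[OF q'] by simp
    qed
    then have "lmult (x @ [(v, t)]) \<inter> lmult [(v, b)] =
        {z. \<exists>y\<in>lmult x \<inter> lmult [(v, q)]. cong z (y @ [(v, t)])}"
      unfolding lmult_snoc_Int_letter[OF x t b] by blast
    then show ?thesis using lmult_Int_principal_snoc_image[OF t IH[OF q']]
      unfolding lmult_Int_principal_def by blast
  qed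
qed

lemma lmult_Int_letter_commuting:
  assumes x: "x \<in> lists letters" and b: "(v, b) \<in> letters"
    and commuting: "\<forall>y\<in>set x. (fst y, v) \<in> E"
  shows "lmult x \<inter> lmult [(v, b)] = lmult ((v, b) # x)"
proof (intro Set.set_eqI iffI)
  fix z assume z: "z \<in> lmult x \<inter> lmult [(v, b)]"
  then obtain c where c: "c \<in> lists letters" "cong z (c @ x)" by (auto simp: lmult_def)
  have "right_part v z = right_part v c"
    using right_part_cong[OF c(2)] right_part_append_commuting[OF commuting] by simp
  then have "c \<in> lmult [(v, b)]" using z c lmult_letter_iff[OF b] by simp
  then obtain d where d: "d \<in> lists letters" "cong c (d @ [(v, b)])" by (auto simp: lmult_def)
  have "cong z (d @ (v, b) # x)"
    using cong_trans[OF c(2) cong_append_right[OF d(2) x]] by simp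
  then show "z \<in> lmult ((v, b) # x)" using d cong_lists[OF c(2)] unfolding lmult_def by blast
next
  fix z assume "z \<in> lmult ((v, b) # x)"
  then obtain d where d: "d \<in> lists letters" "cong z ((d @ [(v, b)]) @ x)" "z \<in> lists letters"
    by (auto simp: lmult_def)
  have "d @ [(v, b)] \<in> lists letters" using d b by simp
  then have "z \<in> lmult x" using d unfolding lmult_def by blast
  moreover have "right_part v z = right_part v d \<otimes>\<^bsub>C v\<^esub> b"
    using right_part_cong[OF d(2)] right_part_append_commuting[OF commuting, of "d @ [(v, b)]"]
      right_part_snoc[OF d(1) b] by simp
  then have "z \<in> lmult [(v, b)]"
    using lmult_letter_iff[OF b] d(3) right_part_carrier[OF d(1)] b
    unfolding principal_left_ideal_def by auto
  ultimately show "z \<in> lmult x \<inter> lmult [(v, b)]" by simp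
qed

text \<open>Every left multiple of r has trivial v-entry at the right end, so lmult r lies inside
  or outside lmult [(v, b)] as a whole.\<close>

lemma lmult_Int_principal_blocked:
  assumes R: "reduced r" and "no_front_unit r" and "\<not> ends_in v r"
    and "\<exists>y\<in>set r. (fst y, v) \<notin> E" and b: "(v, b) \<in> letters"
  shows "lmult_Int_principal r [(v, b)]"
proof -
  have one: "right_part v z = \<one>\<^bsub>C v\<^esub>" if z: "z \<in> lmult r" for z
  proof -
    obtain c where c: "c \<in> lists letters" "cong z (c @ r)" using z unfolding lmult_def by blast
    have "right_part v z = right_entry v (foldl mult_letter (nf c) r)"
      using right_part_cong[OF c(2)] by (simp add: right_part_def nf_append)
    also have "\<dots> = \<one>\<^bsub>C v\<^esub>" using right_entry_blocked assms reduced_nf[OF c(1)] by blast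
    finally show ?thesis .
  qed
  show ?thesis
  proof (cases "\<one>\<^bsub>C v\<^esub> \<in> principal_left_ideal (C v) b")
    case True
    have "z \<in> lmult [(v, b)]" if "z \<in> lmult r" for z
      using that one True lmult_letter_iff[OF b] subsetD[OF lmult_lists] by simp
    then have "lmult r \<inter> lmult [(v, b)] = lmult r" by blast
    then show ?thesis using reduced_lists[OF R] unfolding lmult_Int_principal_def by blast
  next
    case False
    then show ?thesis using one lmult_letter_iff[OF b] unfolding lmult_Int_principal_def by auto
  qed
qed

lemma lmult_Int_principal_ends_in:
  assumes R: "reduced r" and e: "ends_in v r" and b: "(v, b) \<in> letters"
    and IH: "\<And>q. (v, q) \<in> letters \<Longrightarrow> lmult_Int_principal (strip_right v r) [(v, q)]"
  shows "lmult_Int_principal r [(v, b)]"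
proof -
  have t: "(v, right_entry v r) \<in> letters" using reduced_last_entry[OF R e] e
    by (simp add: right_entry_def)
  have "lmult r = lmult (strip_right v r @ [(v, right_entry v r)])"
    using cong_strip_right[OF R] t lmult_cong by simp
  moreover have "lmult_Int_principal (strip_right v r @ [(v, right_entry v r)]) [(v, b)]"
    using lmult_Int_principal_snoc_letter[OF strip_right_lists[OF R] t b] IH by blast
  ultimately show ?thesis by (simp add: lmult_Int_principal_def)
qed

lemma lmult_Int_principal_letter:
  "x \<in> lists letters \<Longrightarrow> (v, b) \<in> letters \<Longrightarrow> lmult_Int_principal x [(v, b)]"
proof (induction "length x" arbitrary: x b rule: less_induct)
  case less
  let ?r = "nf x"
  have R: "reduced ?r" using reduced_nf less.prems by simp
  have r: "?r \<in> lists letters" "length ?r \<le> length x" using reduced_lists[OF R] length_nf by auto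
  have lmult_r: "lmult x = lmult ?r" using lmult_cong[OF nf_cong] less.prems by simp
  have "lmult_Int_principal ?r [(v, b)]"
  proof (cases "ends_in v ?r")
    case True
    have "length (strip_right v ?r) < length x" using length_strip_right[OF True] r(2) by simp
    then show ?thesis
      using lmult_Int_principal_ends_in[OF R True less.prems(2)] less.hyps strip_right_lists[OF R]
      by blast
  next
    case not_ends_in: False
    show ?thesis
    proof (cases "\<forall>y\<in>set ?r. (fst y, v) \<in> E")
      case True
      have "(v, b) # ?r \<in> lists letters" using r(1) less.prems(2) by simp
      then show ?thesis using lmult_Int_letter_commuting[OF r(1) less.prems(2) True]
        unfolding lmult_Int_principal_def by blast
    next
      case blocked: False
      show ?thesis
      proof (cases "no_front_unit ?r")
        case True
        then show ?thesis using lmult_Int_principal_blocked R not_ends_in blocked less.prems(2)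
          by blast
      next
        case False
        then obtain p l q where front: "?r = p @ [l] @ q" "\<forall>y\<in>set p. (fst y, fst l) \<in> E"
          "snd l \<in> Units (C (fst l))" unfolding no_front_unit_def by blast
        then have "lmult ?r = lmult (p @ q)"
          using lmult_drop_front_unit[OF r(1), of p "fst l" "snd l" q] by simp
        moreover have "length (p @ q) < length x" using front(1) r(2) by simp
        then have "lmult_Int_principal (p @ q) [(v, b)]"
          using less.hyps less.prems(2) front(1) r(1) by simp
        ultimately show ?thesis by (simp add: lmult_Int_principal_def)
      qed
    qed
  qed
  then show ?case using lmult_r by (simp add: lmult_Int_principal_def)
qed

lemma lmult_snoc_Int:
  assumes a: "a \<in> lists letters" and b: "b \<in> lists letters" and l: "l \<in> letters"
  shows "lmult (a @ [l]) \<inter> lmult (b @ [l]) = {z. \<exists>w\<in>lmult a \<inter> lmult b. cong z (w @ [l])}"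
proof (rule Set.set_eqI, rule iffI)
  fix z assume "z \<in> lmult (a @ [l]) \<inter> lmult (b @ [l])"
  then obtain c d where c: "c \<in> lists letters" "cong z (c @ a @ [l])"
    and d: "d \<in> lists letters" "cong z (d @ b @ [l])"
    by (auto simp: lmult_def)
  have "cong ((c @ a) @ [l]) ((d @ b) @ [l])" using cong_trans[OF cong_sym[OF c(2)] d(2)] by simp
  then have cd: "cong (c @ a) (d @ b)" using cong_rcancel[of "c @ a" "d @ b" "[l]"] c d a b l
    by simp
  have "c @ a \<in> lmult a" using c a cong_refl[of "c @ a"] unfolding lmult_def by auto
  moreover have "c @ a \<in> lmult b" using cd d cong_lists[OF cd] unfolding lmult_def by blast
  moreover have "cong z ((c @ a) @ [l])" using c by simp
  ultimately show "z \<in> {z. \<exists>w\<in>lmult a \<inter> lmult b. cong z (w @ [l])}" by blast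
next
  fix z assume "z \<in> {z. \<exists>w\<in>lmult a \<inter> lmult b. cong z (w @ [l])}"
  then obtain w where w: "w \<in> lmult a" "w \<in> lmult b" "cong z (w @ [l])" by blast
  have "z \<in> lmult (a @ [l])" using lmult_snoc[OF a l] w by blast
  moreover have "z \<in> lmult (b @ [l])" using lmult_snoc[OF b l] w by blast
  ultimately show "z \<in> lmult (a @ [l]) \<inter> lmult (b @ [l])" by simp
qed

lemma lmult_Int_principal_snoc:
  assumes a: "a \<in> lists letters" and b: "b \<in> lists letters" and l: "l \<in> letters"
    and ab: "lmult_Int_principal a b"
  shows "lmult_Int_principal (a @ [l]) (b @ [l])"
  using lmult_Int_principal_snoc_image[OF l ab lmult_snoc_Int[OF a b l]]
  unfolding lmult_Int_principal_def by blast

text \<open>Induction on the right factor y = y0 @ [l]: the LCM with the single letter l already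
  ends in l, and the remaining problem for y0 is handled by right cancellation.\<close>

lemma lmult_Int_principal_words:
  "y \<in> lists letters \<Longrightarrow> x \<in> lists letters \<Longrightarrow> lmult_Int_principal x y"
proof (induction y arbitrary: x rule: rev_induct)
  case Nil
  have "lmult x \<inter> lmult [] = lmult x" using lmult_Nil lmult_lists by auto
  then show ?case using Nil unfolding lmult_Int_principal_def by blast
next
  case (snoc l y)
  have y: "y \<in> lists letters" and l: "l \<in> letters" using snoc.prems by auto
  note sub = lmult_snoc_subset[OF y, of l]
  from lmult_Int_principal_letter[OF snoc.prems(2), of "fst l" "snd l"] l
  consider "lmult x \<inter> lmult [l] = {}"
    | m where "m \<in> lists letters" "lmult x \<inter> lmult [l] = lmult m"
    unfolding lmult_Int_principal_def by auto
  then show ?case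
  proof cases
    case 1
    then show ?thesis using sub unfolding lmult_Int_principal_def by blast
  next
    case (2 m)
    have "m \<in> lmult [l]" using lmult_self[OF 2(1)] 2(2) by blast
    then obtain m' where m': "m' \<in> lists letters" "cong m (m' @ [l])" by (auto simp: lmult_def)
    have "lmult x \<inter> lmult (y @ [l]) = lmult x \<inter> lmult [l] \<inter> lmult (y @ [l])" using sub by blast
    also have "\<dots> = lmult (m' @ [l]) \<inter> lmult (y @ [l])" using 2(2) lmult_cong[OF m'(2)] by simp
    finally have "lmult x \<inter> lmult (y @ [l]) = lmult (m' @ [l]) \<inter> lmult (y @ [l])" .
    moreover have "lmult_Int_principal (m' @ [l]) (y @ [l])"
      using lmult_Int_principal_snoc[OF m'(1) y l] snoc.IH[OF y m'(1)] by simp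
    ultimately show ?thesis by (simp add: lmult_Int_principal_def)
  qed
qed

lemma left_LCM_monoid_GP: "left_LCM_monoid GP"
  unfolding left_LCM_monoid_def
proof (intro conjI ballI monoid_GP right_cancellative_GP)
  fix A B assume "A \<in> carrier GP" "B \<in> carrier GP"
  then obtain a b where ab: "a \<in> lists letters" "b \<in> lists letters" "A = cls a" "B = cls b"
    by (auto simp: carrier_GP)
  have pa: "principal_left_ideal GP A = cls ` lmult a" "principal_left_ideal GP B = cls ` lmult b"
    using ab principal_left_ideal_GP by auto
  from lmult_Int_principal_words[OF ab(2,1)] consider "lmult a \<inter> lmult b = {}"
    | m where "m \<in> lists letters" "lmult a \<inter> lmult b = lmult m"
    unfolding lmult_Int_principal_def by blast
  then show "principal_left_ideal GP A \<inter> principal_left_ideal GP B = {} \<or>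
      (\<exists>m\<in>carrier GP.
        principal_left_ideal GP A \<inter> principal_left_ideal GP B = principal_left_ideal GP m)"
  proof cases
    case 1
    then show ?thesis using pa image_cls_Int_lmult[of a b] by simp
  next
    case (2 m)
    then have "principal_left_ideal GP A \<inter> principal_left_ideal GP B =
        principal_left_ideal GP (cls m)"
      using pa principal_left_ideal_GP[OF 2(1)] image_cls_Int_lmult[of a b] by simp
    moreover have "cls m \<in> carrier GP" using 2 by (simp add: carrier_GP)
    ultimately show ?thesis by blast
  qed
qed

end

theorem theorem2p6:
  fixes V :: "'v set" and E :: "('v \<times> 'v) set" and C :: "'v \<Rightarrow> 'a monoid"
  assumes "E \<subseteq> V \<times> V" and "irrefl E" and "sym E"
    and "\<forall>v\<in>V. left_LCM_monoid (C v)"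
  shows "left_LCM_monoid (graph_product V E C)"
proof -
  interpret LCM_graph_product V E C using assms by unfold_locales
  show ?thesis by (rule left_LCM_monoid_GP)
qed

end
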